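(* Let $\beta,\delta\in(0,1)$, $K>0$, $T>0$, and consider the controlled system $$f'=\tfrac12 fm\beta L-\delta f-\eta_1(t)f,\qquad m'=\tfrac12 fm\beta L-\delta m-\eta_2(t)m,\qquad L=1-\frac{f+m}{K},$$ with initial conditions $f(t_0)=f_0$, $m(t_0)=m_0$. Let $$U_4=\{(\eta_1,\eta_2):\ \eta_i\text{ measurable},\ 0\le\eta_1(t)\le1,\ 0\le\eta_2(t)\le1,\ t\in[0,T]\}$$ and $J_4(\eta_1,\eta_2)=\int_0^T\big(-(f+m)-\tfrac12(\eta_1^2+\eta_2^2)\big)dt$. Then there exists $(\eta_1^*,\eta_2^* )\in U_4$ with $J_4(\eta_1^*,\eta_2^* )=\max_{(\eta_1,\eta_2)}J_4(\eta_1,\eta_2)$.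
   Context: $f,m$ are female and male densities, and $\eta_1,\eta_2$ are time-dependent female and male harvesting rates. *)

theory Defs
  imports "HOL-Analysis.Analysis"
begin

definition U4 :: "real \<Rightarrow> ((real \<Rightarrow> real) \<times> (real \<Rightarrow> real)) set" where
  "U4 T = {(e1, e2). set_borel_measurable lborel {0..T} e1 \<and> set_borel_measurable lborel {0..T} e2 \<and>
     (\<forall>t\<in>{0..T}. 0 \<le> e1 t \<and> e1 t \<le> 1 \<and> 0 \<le> e2 t \<and> e2 t \<le> 1)}"

definition Lfac :: "real \<Rightarrow> real \<Rightarrow> real \<Rightarrow> real" where
  "Lfac K x y = 1 - (x + y) / K"

definition rhs_f :: "real \<Rightarrow> real \<Rightarrow> real \<Rightarrow> real \<Rightarrow> real \<Rightarrow> real \<Rightarrow> real" where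
  "rhs_f \<beta> \<delta> K e1 x y = 1/2 * x * y * \<beta> * Lfac K x y - \<delta> * x - e1 * x"

definition rhs_m :: "real \<Rightarrow> real \<Rightarrow> real \<Rightarrow> real \<Rightarrow> real \<Rightarrow> real \<Rightarrow> real" where
  "rhs_m \<beta> \<delta> K e2 x y = 1/2 * x * y * \<beta> * Lfac K x y - \<delta> * y - e2 * y"

text \<open>(f,m) is a (Caratheodory, i.e. absolutely continuous) solution on [0,T] of the system
  driven by controls (e1,e2) with f(0)=f0, m(0)=m0, written in integral form.\<close>
definition is_state ::
  "real \<Rightarrow> real \<Rightarrow> real \<Rightarrow> real \<Rightarrow> real \<Rightarrow> real \<Rightarrow> (real \<Rightarrow> real) \<Rightarrow> (real \<Rightarrow> real)
   \<Rightarrow> (real \<Rightarrow> real) \<Rightarrow> (real \<Rightarrow> real) \<Rightarrow> bool" where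
  "is_state \<beta> \<delta> K T f0 m0 e1 e2 f m \<longleftrightarrow>
     continuous_on {0..T} f \<and> continuous_on {0..T} m \<and>
     (\<forall>t\<in>{0..T}.
        set_integrable lborel {0..t} (\<lambda>s. rhs_f \<beta> \<delta> K (e1 s) (f s) (m s)) \<and>
        set_integrable lborel {0..t} (\<lambda>s. rhs_m \<beta> \<delta> K (e2 s) (f s) (m s)) \<and>
        f t = f0 + (LINT s:{0..t}|lborel. rhs_f \<beta> \<delta> K (e1 s) (f s) (m s)) \<and>
        m t = m0 + (LINT s:{0..t}|lborel. rhs_m \<beta> \<delta> K (e2 s) (f s) (m s)))"

definition J4 :: "real \<Rightarrow> (real \<Rightarrow> real) \<Rightarrow> (real \<Rightarrow> real) \<Rightarrow> (real \<Rightarrow> real) \<Rightarrow> (real \<Rightarrow> real) \<Rightarrow> real" where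
  "J4 T e1 e2 f m = (LINT t:{0..T}|lborel. - (f t + m t) - 1/2 * ((e1 t)\<^sup>2 + (e2 t)\<^sup>2))"

end

(* The direct method. Every admissible state stays in the box f, m >= 0, f + m <= max (f0 + m0) K,
   so along a maximising sequence the states are uniformly bounded and uniformly Lipschitz and, by
   Arzela-Ascoli, converge uniformly along a subsequence. The controls enter the dynamics linearly
   and the cost concavely: convex combinations of the tails of the control sequence converge a.e.
   (a Mazur-type argument in L^2), their limit drives the limit state, and its cost is at least the
   supremum. An admissible process exists at all by Picard iteration for the system clipped to the
   box. *)

theory Submission
  imports Defs "HOL-Complex_Analysis.Great_Picard"
begin

section \<open>Integrals over initial segments\<close>

lemma set_integrable_bounded_Icc:
  fixes h :: "real \<Rightarrow> real"
  assumes "h \<in> borel_measurable lborel" "\<And>x. x \<in> {a..b} \<Longrightarrow> \<bar>h x\<bar> \<le> B"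
  shows "set_integrable lborel {a..b} h"
  unfolding set_integrable_def
  by (rule integrableI_bounded_set[where A="{a..b}" and B=B])
    (use assms in \<open>auto simp: indicator_def emeasure_lborel_Icc_eq\<close>)

lemma set_integrable_bounded:
  fixes h :: "real \<Rightarrow> real"
  assumes "h \<in> borel_measurable lborel" "\<And>x. \<bar>h x\<bar> \<le> B"
  shows "set_integrable lborel {a..b} h"
  using assms by (intro set_integrable_bounded_Icc) auto

lemma set_integral_Icc_eq_Ioc:
  fixes h :: "real \<Rightarrow> real"
  shows "(LINT x:{a..b}|lborel. h x) = (LINT x:{a<..b}|lborel. h x)"
  by (cases "a \<le> b") (simp_all add: interval_integral_Icc[symmetric] interval_integral_Ioc[symmetric])

lemma set_integral_nonpos_Icc:
  fixes h :: "real \<Rightarrow> real"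
  assumes "\<And>x. x \<in> {a<..b} \<Longrightarrow> h x \<le> 0"
  shows "(LINT x:{a..b}|lborel. h x) \<le> 0"
proof -
  have "(LINT x:{a<..b}|lborel. h x) \<le> 0"
    unfolding set_lebesgue_integral_def
    using integral_nonneg_AE[of "\<lambda>x. - (indicator {a<..b} x *\<^sub>R h x)" lborel] assms
    by (auto simp: indicator_def)
  then show ?thesis by (simp add: set_integral_Icc_eq_Ioc)
qed

lemma set_integral_abs_le_Icc:
  fixes h :: "real \<Rightarrow> real"
  assumes "h \<in> borel_measurable lborel" "\<And>x. x \<in> {a<..b} \<Longrightarrow> \<bar>h x\<bar> \<le> B" "a \<le> b"
  shows "\<bar>LINT x:{a..b}|lborel. h x\<bar> \<le> B * (b - a)"
proof -
  have fin: "emeasure lborel {a<..b} < \<infinity>" using assms(3) by (simp add: emeasure_lborel_Ioc)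
  have int: "set_integrable lborel {a<..b} h"
    unfolding set_integrable_def
    by (rule integrableI_bounded_set[where A="{a<..b}" and B=B])
      (use assms fin in \<open>auto simp: indicator_def\<close>)
  have int_const: "set_integrable lborel {a<..b} (\<lambda>_. B)"
    using fin by (simp add: set_integrable_def integrable_real_indicator)
  have "\<bar>LINT x:{a<..b}|lborel. h x\<bar> \<le> (LINT x:{a<..b}|lborel. \<bar>h x\<bar>)"
    using set_integral_norm_bound[OF int] by simp
  also have "\<dots> \<le> (LINT x:{a<..b}|lborel. B)"
    using int int_const assms(2) by (intro set_integral_mono) (auto intro: set_integrable_abs)
  also have "\<dots> = B * (b - a)"
    using assms(3) by (simp add: set_integral_const emeasure_lborel_Ioc)
  finally show ?thesis by (simp add: set_integral_Icc_eq_Ioc)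
qed

definition primitive :: "(real \<Rightarrow> real) \<Rightarrow> real \<Rightarrow> real" where
  "primitive h t = (LINT s:{0..t}|lborel. h s)"

lemma primitive_zero [simp]: "primitive h 0 = 0"
  unfolding primitive_def set_integral_Icc_eq_Ioc by (simp add: set_lebesgue_integral_def)

lemma primitive_cong: "(\<And>s. s \<in> {0..t} \<Longrightarrow> g s = h s) \<Longrightarrow> primitive g t = primitive h t"
  unfolding primitive_def by (rule set_lebesgue_integral_cong) auto

lemma primitive_uminus: "primitive (\<lambda>s. - h s) t = - primitive h t"
  unfolding primitive_def set_lebesgue_integral_def by simp

lemma primitive_cmult: "primitive (\<lambda>s. c * h s) t = c * primitive h t"
  unfolding primitive_def by simp

lemma primitive_add:
  assumes "set_integrable lborel {0..t} g" "set_integrable lborel {0..t} h"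
  shows "primitive (\<lambda>s. g s + h s) t = primitive g t + primitive h t"
  unfolding primitive_def using set_integral_add(2)[OF assms] by simp

lemma primitive_diff:
  assumes "set_integrable lborel {0..t} g" "set_integrable lborel {0..t} h"
  shows "primitive (\<lambda>s. g s - h s) t = primitive g t - primitive h t"
  unfolding primitive_def using set_integral_diff(2)[OF assms] by simp

lemma primitive_sum:
  assumes "\<And>j. j < N \<Longrightarrow> set_integrable lborel {0..t} (h j)"
  shows "primitive (\<lambda>s. \<Sum>j<N. c j * h j s) t = (\<Sum>j<N. c j * primitive (h j) t)"
proof -
  have "primitive (\<lambda>s. \<Sum>j<N. c j * h j s) t = (LBINT s. \<Sum>j<N. c j * (indicator {0..t} s *\<^sub>R h j s))"
    unfolding primitive_def set_lebesgue_integral_def by (simp add: sum_distrib_left algebra_simps)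
  also have "\<dots> = (\<Sum>j<N. c j * primitive (h j) t)"
    unfolding primitive_def set_lebesgue_integral_def
    using assms unfolding set_integrable_def by (subst Bochner_Integration.integral_sum) auto
  finally show ?thesis .
qed

lemma primitive_mono:
  assumes "set_integrable lborel {0..t} g" "set_integrable lborel {0..t} h"
    and "\<And>x. x \<in> {0..t} \<Longrightarrow> g x \<le> h x"
  shows "primitive g t \<le> primitive h t"
  unfolding primitive_def using assms by (rule set_integral_mono)

lemma primitive_abs_le:
  assumes "set_integrable lborel {0..t} g" "set_integrable lborel {0..t} h"
    and "\<And>x. x \<in> {0..t} \<Longrightarrow> \<bar>g x\<bar> \<le> h x"
  shows "\<bar>primitive g t\<bar> \<le> primitive h t"
proof -
  have "\<bar>primitive g t\<bar> \<le> (LINT s:{0..t}|lborel. \<bar>g s\<bar>)"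
    unfolding primitive_def using set_integral_norm_bound[OF assms(1)] by simp
  also have "\<dots> \<le> primitive h t"
    unfolding primitive_def using assms by (intro set_integral_mono) (auto intro: set_integrable_abs)
  finally show ?thesis .
qed

lemma primitive_split:
  fixes h :: "real \<Rightarrow> real"
  assumes "h \<in> borel_measurable lborel" "\<And>x. \<bar>h x\<bar> \<le> B" "0 \<le> s" "s \<le> t"
  shows "primitive h t = primitive h s + (LINT x:{s..t}|lborel. h x)"
proof -
  have int: "set_integrable lborel {0..t} h" using set_integrable_bounded_Icc assms(1,2) by blast
  have "{0..t} = {0..s} \<union> {s<..t}" using assms(3,4) by auto
  then have "primitive h t = (LINT x:{0..s} \<union> {s<..t}|lborel. h x)"
    unfolding primitive_def by simp
  also have "\<dots> = primitive h s + (LINT x:{s<..t}|lborel. h x)"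
    unfolding primitive_def using assms(3,4)
    by (intro set_integral_Un set_integrable_subset[OF int]) auto
  finally show ?thesis by (simp add: set_integral_Icc_eq_Ioc)
qed

lemma primitive_lipschitz:
  fixes h :: "real \<Rightarrow> real"
  assumes "h \<in> borel_measurable lborel" "\<And>x. \<bar>h x\<bar> \<le> B"
  shows "\<bar>primitive h t - primitive h s\<bar> \<le> B * \<bar>t - s\<bar>"
proof -
  have B: "0 \<le> B" using assms(2)[of 0] by simp
  have "\<bar>primitive h t - primitive h s\<bar> \<le> B * (t - s)" if "s \<le> t" for s t
  proof -
    have "primitive h t - primitive h s = (LINT x:{max 0 s..t}|lborel. h x)"
    proof (cases "0 \<le> s")
      case True
      then show ?thesis using primitive_split[OF assms True that] by simp
    next
      case False
      then show ?thesis by (simp add: primitive_def set_lebesgue_integral_def)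
    qed
    also have "\<bar>\<dots>\<bar> \<le> B * (t - s)"
    proof (cases "max 0 s \<le> t")
      case True
      then have "\<bar>LINT x:{max 0 s..t}|lborel. h x\<bar> \<le> B * (t - max 0 s)"
        using set_integral_abs_le_Icc[OF assms(1)] assms(2) by blast
      also have "\<dots> \<le> B * (t - s)" using B by (intro mult_left_mono) auto
      finally show ?thesis .
    qed (use B that in \<open>simp add: set_lebesgue_integral_def\<close>)
    finally show ?thesis .
  qed
  from this[of s t] this[of t s] show ?thesis
    by (cases "s \<le> t") (auto simp: abs_minus_commute)
qed

lemma primitive_continuous:
  fixes h :: "real \<Rightarrow> real"
  assumes "h \<in> borel_measurable lborel" "\<And>x. \<bar>h x\<bar> \<le> B"
  shows "continuous_on UNIV (primitive h)"
proof (rule lipschitz_on_continuous_on)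
  show "B-lipschitz_on UNIV (primitive h)"
    using primitive_lipschitz[OF assms] assms(2)[of 0]
    by (intro lipschitz_onI) (auto simp: dist_real_def)
qed

lemma primitive_tendsto:
  fixes g :: "nat \<Rightarrow> real \<Rightarrow> real"
  assumes "\<And>k. g k \<in> borel_measurable lborel" "G \<in> borel_measurable lborel"
    and "\<And>k s. \<bar>g k s\<bar> \<le> C"
    and "AE s in lborel. s \<in> {0..t} \<longrightarrow> (\<lambda>k. g k s) \<longlonglongrightarrow> G s"
  shows "(\<lambda>k. primitive (g k) t) \<longlonglongrightarrow> primitive G t"
  unfolding primitive_def set_lebesgue_integral_def
proof (rule integral_dominated_convergence[where w="\<lambda>s. indicator {0..t} s * C"])
  show "integrable lborel (\<lambda>s. indicator {0..t} s * C)"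
    by (intro integrable_mult_left integrable_real_indicator) (auto simp: emeasure_lborel_Icc_eq)
  show "AE s in lborel. (\<lambda>k. indicator {0..t} s *\<^sub>R g k s) \<longlonglongrightarrow> indicator {0..t} s *\<^sub>R G s"
    using assms(4) by eventually_elim (auto simp: indicator_def)
  show "AE s in lborel. norm (indicator {0..t} s *\<^sub>R g k s) \<le> indicator {0..t} s * C" for k
    using assms(3) by (auto simp: indicator_def)
qed (use assms(1,2) in measurable)

lemma primitive_power:
  assumes "0 \<le> t"
  shows "primitive (\<lambda>s. s ^ k) t = t ^ Suc k / Suc k"
proof -
  have "primitive (\<lambda>s. s ^ k) t = (LBINT s=ereal 0..ereal t. s ^ k)"
    unfolding primitive_def by (rule interval_integral_Icc[OF assms, symmetric])
  also have "\<dots> = t ^ Suc k / Suc k - 0 ^ Suc k / Suc k"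
  proof (rule interval_integral_FTC_finite)
    fix x :: real
    have "((\<lambda>s. s ^ Suc k) has_real_derivative real (Suc k) * x ^ k) (at x)"
      using DERIV_pow[of "Suc k" x] by simp
    from DERIV_cdivide[OF this, of "Suc k"]
    have "((\<lambda>s. s ^ Suc k / Suc k) has_real_derivative x ^ k) (at x)" by simp
    then show "((\<lambda>s. s ^ Suc k / Suc k) has_vector_derivative x ^ k) (at x within {min 0 t..max 0 t})"
      by (simp add: has_real_derivative_iff_has_vector_derivative has_vector_derivative_at_within)
  qed (intro continuous_intros)
  finally show ?thesis by simp
qed

section \<open>Comparison principles\<close>

lemma last_time_below:
  fixes \<phi> :: "real \<Rightarrow> real"
  assumes "continuous_on {a..t} \<phi>" "a \<le> t" "\<phi> a \<le> c"
  obtains s where "s \<in> {a..t}" "\<phi> s \<le> c" "\<And>x. x \<in> {s<..t} \<Longrightarrow> c < \<phi> x"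
proof -
  define A where "A = {s \<in> {a..t}. \<phi> s \<le> c}"
  have "closed A"
    unfolding A_def using continuous_on_closed_Collect_le[OF assms(1) continuous_on_const] by simp
  moreover have "a \<in> A" and bdd: "bdd_above A"
    using assms(2,3) by (auto simp: A_def intro: bdd_aboveI[where M=t])
  ultimately have "Sup A \<in> A" using closed_contains_Sup by blast
  moreover have "c < \<phi> x" if "x \<in> {Sup A<..t}" for x
    using that cSup_upper[OF _ bdd, of x] \<open>Sup A \<in> A\<close> by (force simp: A_def)
  ultimately show ?thesis using that by (auto simp: A_def)
qed

lemma integral_equation_upper_barrier:
  fixes h \<phi> :: "real \<Rightarrow> real"
  assumes "h \<in> borel_measurable lborel" "\<And>x. \<bar>h x\<bar> \<le> B"
    and "continuous_on {0..T} \<phi>"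
    and eq: "\<And>t. t \<in> {0..T} \<Longrightarrow> \<phi> t = \<phi> 0 + primitive h t"
    and "\<phi> 0 \<le> c" and "\<And>s. s \<in> {0..T} \<Longrightarrow> c < \<phi> s \<Longrightarrow> h s \<le> 0"
    and t: "t \<in> {0..T}"
  shows "\<phi> t \<le> c"
proof -
  have "continuous_on {0..t} \<phi>" using assms(3) t by (auto intro: continuous_on_subset)
  then obtain s where s: "s \<in> {0..t}" "\<phi> s \<le> c" and above: "\<And>x. x \<in> {s<..t} \<Longrightarrow> c < \<phi> x"
    using last_time_below[of 0 t \<phi> c] assms(5) t by auto
  have "\<phi> t = \<phi> s + (LINT x:{s..t}|lborel. h x)"
    using eq[OF t] eq[of s] primitive_split[OF assms(1,2), of s t] s t by auto
  also have "(LINT x:{s..t}|lborel. h x) \<le> 0"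
    using above assms(6) s t by (intro set_integral_nonpos_Icc) auto
  finally show ?thesis using s by simp
qed

text \<open>On a short interval after the last time \<open>s\<close> with \<open>\<phi> s \<ge> 0\<close>, the minimum \<open>u < 0\<close> of \<open>\<phi>\<close>
  would satisfy \<open>u \<ge> \<phi> s + u / 2\<close>.\<close>
lemma linear_integral_equation_nonneg:
  fixes g \<phi> :: "real \<Rightarrow> real"
  assumes g: "g \<in> borel_measurable lborel" "\<And>x. \<bar>g x\<bar> \<le> G"
    and \<phi>: "continuous_on UNIV \<phi>" "\<And>x. \<bar>\<phi> x\<bar> \<le> P"
    and eq: "\<And>t. t \<in> {0..T} \<Longrightarrow> \<phi> t = \<phi> 0 + primitive (\<lambda>s. \<phi> s * g s) t"
    and "0 \<le> \<phi> 0" and t: "t \<in> {0..T}"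
  shows "0 \<le> \<phi> t"
proof (rule ccontr)
  assume "\<not> 0 \<le> \<phi> t"
  have G: "0 \<le> G" using g(2)[of 0] by simp
  have hm: "(\<lambda>s. \<phi> s * g s) \<in> borel_measurable lborel"
    using borel_measurable_continuous_onI[OF \<phi>(1)] g(1) by measurable
  have hb: "\<bar>\<phi> x * g x\<bar> \<le> P * G" for x
    unfolding abs_mult by (rule mult_mono[OF \<phi>(2) g(2)]) (use \<phi>(2)[of 0] in auto)
  have "continuous_on {0..t} (\<lambda>x. - \<phi> x)"
    using \<phi>(1) by (intro continuous_intros) (auto intro: continuous_on_subset)
  then obtain s where s: "s \<in> {0..t}" "0 \<le> \<phi> s" and neg: "\<And>x. x \<in> {s<..t} \<Longrightarrow> \<phi> x < 0"
    using last_time_below[of 0 t "\<lambda>x. - \<phi> x" 0] \<open>0 \<le> \<phi> 0\<close> t by auto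
  have "s < t" using s \<open>\<not> 0 \<le> \<phi> t\<close> by (cases "s = t") auto
  define e where "e = min (t - s) (1 / (2 * G + 2))"
  have e: "0 < e" "s + e \<le> t" using \<open>s < t\<close> G by (auto simp: e_def)
  have Ge: "G * e \<le> 1 / 2"
  proof -
    have "G * e \<le> G * (1 / (2 * G + 2))" using G by (intro mult_left_mono) (auto simp: e_def)
    also have "\<dots> \<le> 1 / 2" using G by (simp add: field_simps)
    finally show ?thesis .
  qed
  have "continuous_on {s..s + e} \<phi>" using \<phi>(1) by (auto intro: continuous_on_subset)
  then obtain r where r: "r \<in> {s..s + e}" and rmin: "\<And>x. x \<in> {s..s + e} \<Longrightarrow> \<phi> r \<le> \<phi> x"
    using continuous_attains_inf[of "{s..s + e}" \<phi>] e(1) by auto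
  define u where "u = \<phi> r"
  have "u < 0" using rmin[of "s + e"] neg[of "s + e"] e by (auto simp: u_def)
  then have "s < r" using r s(2) by (cases "r = s") (auto simp: u_def)
  have "u = \<phi> s + (LINT x:{s..r}|lborel. \<phi> x * g x)"
    using eq[of r] eq[of s] primitive_split[OF hm hb, of s r] s r e t by (auto simp: u_def)
  moreover have "\<bar>LINT x:{s..r}|lborel. \<phi> x * g x\<bar> \<le> (- u * G) * (r - s)"
  proof (rule set_integral_abs_le_Icc[OF hm])
    fix x assume x: "x \<in> {s<..r}"
    then have "\<bar>\<phi> x\<bar> \<le> - u" using rmin[of x] neg[of x] r e by (auto simp: u_def)
    then show "\<bar>\<phi> x * g x\<bar> \<le> - u * G"
      unfolding abs_mult using g(2)[of x] by (intro mult_mono) auto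
  qed (use \<open>s < r\<close> in auto)
  moreover have "(- u * G) * (r - s) \<le> - u * (1 / 2)"
  proof -
    have "(- u * G) * (r - s) \<le> (- u * G) * e"
      using r \<open>u < 0\<close> G by (intro mult_left_mono) (auto simp: mult_nonpos_nonneg)
    also have "\<dots> \<le> - u * (1 / 2)" using \<open>u < 0\<close> Ge by (simp add: mult.assoc mult_left_mono)
    finally show ?thesis .
  qed
  ultimately show False using \<open>u < 0\<close> s(2) by linarith
qed

section \<open>Picard iteration for planar systems\<close>

lemma convergent_if_summable_increments:
  fixes X :: "nat \<Rightarrow> 'a::banach"
  assumes "summable (\<lambda>n. norm (X (Suc n) - X n))"
  shows "convergent X"
proof -
  have "(\<lambda>n. X 0 + (\<Sum>k<n. X (Suc k) - X k)) \<longlonglongrightarrow> X 0 + (\<Sum>k. X (Suc k) - X k)"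
    using summable_norm_cancel[OF assms] by (intro tendsto_intros summable_LIMSEQ)
  then show ?thesis by (auto simp: sum_lessThan_telescope convergent_def)
qed

locale picard_planar =
  fixes F G :: "real \<Rightarrow> real \<Rightarrow> real" and B L x0 y0 :: real
  assumes F_bound: "\<And>x y. \<bar>F x y\<bar> \<le> B" and G_bound: "\<And>x y. \<bar>G x y\<bar> \<le> B"
    and F_lipschitz: "\<And>x y x' y'. \<bar>F x y - F x' y'\<bar> \<le> L * (\<bar>x - x'\<bar> + \<bar>y - y'\<bar>)"
    and G_lipschitz: "\<And>x y x' y'. \<bar>G x y - G x' y'\<bar> \<le> L * (\<bar>x - x'\<bar> + \<bar>y - y'\<bar>)"
begin

lemma B_nonneg: "0 \<le> B" and L_nonneg: "0 \<le> L"
  using F_bound[of 0 0] F_lipschitz[of 1 0 0 0] by auto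

lemma continuous_on_field:
  assumes "\<And>x y x' y'. \<bar>H x y - H x' y'\<bar> \<le> L * (\<bar>x - x'\<bar> + \<bar>y - y'\<bar>)"
    and "continuous_on UNIV u" "continuous_on UNIV v"
  shows "continuous_on UNIV (\<lambda>s. H (u s) (v s))"
proof -
  have "(2 * L)-lipschitz_on UNIV (\<lambda>p. H (fst p) (snd p))"
  proof (rule lipschitz_onI)
    fix p q :: "real \<times> real"
    have "\<bar>fst p - fst q\<bar> + \<bar>snd p - snd q\<bar> \<le> 2 * dist p q"
      using dist_fst_le[of p q] dist_snd_le[of p q] by (simp add: dist_real_def)
    then have "L * (\<bar>fst p - fst q\<bar> + \<bar>snd p - snd q\<bar>) \<le> L * (2 * dist p q)"
      using L_nonneg by (rule mult_left_mono)
    then show "dist (H (fst p) (snd p)) (H (fst q) (snd q)) \<le> 2 * L * dist p q"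
      using assms(1)[of "fst p" "snd p" "fst q" "snd q"] by (simp add: dist_real_def)
  qed (use L_nonneg in simp)
  then have "continuous_on UNIV (\<lambda>p. H (fst p) (snd p))" by (rule lipschitz_on_continuous_on)
  then show ?thesis
    using continuous_on_compose2[of UNIV "\<lambda>p. H (fst p) (snd p)" UNIV "\<lambda>s. (u s, v s)"] assms(2,3)
    by (auto intro: continuous_on_Pair)
qed

lemma measurable_field:
  assumes "\<And>x y x' y'. \<bar>H x y - H x' y'\<bar> \<le> L * (\<bar>x - x'\<bar> + \<bar>y - y'\<bar>)"
    and "continuous_on UNIV u" "continuous_on UNIV v"
  shows "(\<lambda>s. H (u s) (v s)) \<in> borel_measurable lborel"
  using borel_measurable_continuous_onI[OF continuous_on_field[OF assms]] by simp

primrec iter :: "nat \<Rightarrow> (real \<Rightarrow> real) \<times> (real \<Rightarrow> real)" where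
  "iter 0 = (\<lambda>_. x0, \<lambda>_. y0)"
| "iter (Suc k) = (case iter k of (u, v) \<Rightarrow>
     (\<lambda>t. x0 + primitive (\<lambda>s. F (u s) (v s)) t, \<lambda>t. y0 + primitive (\<lambda>s. G (u s) (v s)) t))"

definition iter_x :: "nat \<Rightarrow> real \<Rightarrow> real" where "iter_x k = fst (iter k)"
definition iter_y :: "nat \<Rightarrow> real \<Rightarrow> real" where "iter_y k = snd (iter k)"

lemma iter_0: "iter_x 0 t = x0" "iter_y 0 t = y0"
  by (simp_all add: iter_x_def iter_y_def)

lemma iter_Suc:
  "iter_x (Suc k) t = x0 + primitive (\<lambda>s. F (iter_x k s) (iter_y k s)) t"
  "iter_y (Suc k) t = y0 + primitive (\<lambda>s. G (iter_x k s) (iter_y k s)) t"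
  by (simp_all add: iter_x_def iter_y_def split: prod.split)

lemma continuous_iter: "continuous_on UNIV (iter_x k) \<and> continuous_on UNIV (iter_y k)"
proof (induction k)
  case (Suc k)
  then have "(\<lambda>s. F (iter_x k s) (iter_y k s)) \<in> borel_measurable lborel"
    "(\<lambda>s. G (iter_x k s) (iter_y k s)) \<in> borel_measurable lborel"
    using measurable_field F_lipschitz G_lipschitz by blast+
  then show ?case
    using primitive_continuous[OF _ F_bound] primitive_continuous[OF _ G_bound]
    by (auto simp: iter_Suc[abs_def] intro!: continuous_intros)
qed (simp add: iter_0[abs_def])

lemma measurable_iter_field:
  assumes "\<And>x y x' y'. \<bar>H x y - H x' y'\<bar> \<le> L * (\<bar>x - x'\<bar> + \<bar>y - y'\<bar>)"
  shows "(\<lambda>s. H (iter_x k s) (iter_y k s)) \<in> borel_measurable lborel"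
  using continuous_iter[of k] measurable_field[OF assms] by blast

lemma lipschitz_iter: "\<bar>iter_x k a - iter_x k b\<bar> \<le> B * \<bar>a - b\<bar> \<and> \<bar>iter_y k a - iter_y k b\<bar> \<le> B * \<bar>a - b\<bar>"
proof (cases k)
  case (Suc j)
  show ?thesis
    using primitive_lipschitz[OF measurable_iter_field[OF F_lipschitz] F_bound, of j a b]
      primitive_lipschitz[OF measurable_iter_field[OF G_lipschitz] G_bound, of j a b]
    by (simp add: Suc iter_Suc)
qed (simp add: iter_0 B_nonneg)

lemma primitive_field_increment:
  assumes H_lip: "\<And>x y x' y'. \<bar>H x y - H x' y'\<bar> \<le> L * (\<bar>x - x'\<bar> + \<bar>y - y'\<bar>)"
    and H_bound: "\<And>x y. \<bar>H x y\<bar> \<le> B" and "0 \<le> t" "0 \<le> c"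
    and step: "\<And>s. s \<in> {0..t} \<Longrightarrow>
      \<bar>iter_x (Suc k) s - iter_x k s\<bar> + \<bar>iter_y (Suc k) s - iter_y k s\<bar> \<le> c * s ^ n"
  shows "\<bar>primitive (\<lambda>s. H (iter_x (Suc k) s) (iter_y (Suc k) s) - H (iter_x k s) (iter_y k s)) t\<bar>
    \<le> L * c * t ^ Suc n / Suc n"
proof -
  note [measurable] = measurable_iter_field[OF H_lip]
  have "\<bar>H a b - H a' b'\<bar> \<le> 2 * B" for a b a' b'
    using H_bound[of a b] H_bound[of a' b'] by linarith
  then have "set_integrable lborel {0..t}
      (\<lambda>s. H (iter_x (Suc k) s) (iter_y (Suc k) s) - H (iter_x k s) (iter_y k s))"
    by (intro set_integrable_bounded_Icc[where B="2 * B"]) auto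
  moreover have "\<bar>L * c * s ^ n\<bar> \<le> L * c * t ^ n" if "s \<in> {0..t}" for s
    using that assms(4) L_nonneg by (simp add: abs_mult mult_left_mono power_mono)
  then have "set_integrable lborel {0..t} (\<lambda>s. L * c * s ^ n)"
    by (intro set_integrable_bounded_Icc) auto
  moreover have "\<bar>H (iter_x (Suc k) s) (iter_y (Suc k) s) - H (iter_x k s) (iter_y k s)\<bar> \<le> L * c * s ^ n"
    if "s \<in> {0..t}" for s
    using order_trans[OF H_lip mult_left_mono[OF step[OF that] L_nonneg]] by (simp add: mult.assoc)
  ultimately have
    "\<bar>primitive (\<lambda>s. H (iter_x (Suc k) s) (iter_y (Suc k) s) - H (iter_x k s) (iter_y k s)) t\<bar>
      \<le> primitive (\<lambda>s. L * c * s ^ n) t"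
    by (rule primitive_abs_le)
  also have "\<dots> = L * c * t ^ Suc n / Suc n"
    by (simp add: primitive_cmult primitive_power[OF \<open>0 \<le> t\<close>] del: power_Suc)
  finally show ?thesis .
qed

lemma increment_iter:
  assumes "0 \<le> t"
  shows "\<bar>iter_x (Suc k) t - iter_x k t\<bar> + \<bar>iter_y (Suc k) t - iter_y k t\<bar>
    \<le> 2 * B * (2 * L) ^ k * t ^ Suc k / fact (Suc k)"
  using assms
proof (induction k arbitrary: t)
  case 0
  then show ?case
    using primitive_lipschitz[OF measurable_iter_field[OF F_lipschitz] F_bound, of 0 t 0]
      primitive_lipschitz[OF measurable_iter_field[OF G_lipschitz] G_bound, of 0 t 0]
    by (simp add: iter_Suc iter_0)
next
  case (Suc k)
  define c where "c = 2 * B * (2 * L) ^ k / fact (Suc k)"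
  have c: "0 \<le> c" using B_nonneg L_nonneg by (simp add: c_def)
  have step: "\<bar>iter_x (Suc k) s - iter_x k s\<bar> + \<bar>iter_y (Suc k) s - iter_y k s\<bar> \<le> c * s ^ Suc k"
    if "s \<in> {0..t}" for s
    using Suc.IH[of s] that by (simp add: c_def)
  have "iter_x (Suc (Suc k)) t - iter_x (Suc k) t
      = primitive (\<lambda>s. F (iter_x (Suc k) s) (iter_y (Suc k) s) - F (iter_x k s) (iter_y k s)) t"
    "iter_y (Suc (Suc k)) t - iter_y (Suc k) t
      = primitive (\<lambda>s. G (iter_x (Suc k) s) (iter_y (Suc k) s) - G (iter_x k s) (iter_y k s)) t"
    unfolding iter_Suc[of "Suc k" t] iter_Suc[of k t]
    by (simp_all add: primitive_diff
        set_integrable_bounded_Icc[OF measurable_iter_field[OF F_lipschitz] F_bound]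
        set_integrable_bounded_Icc[OF measurable_iter_field[OF G_lipschitz] G_bound])
  moreover have "2 * (L * c * t ^ Suc (Suc k) / Suc (Suc k))
      = 2 * B * (2 * L) ^ Suc k * t ^ Suc (Suc k) / fact (Suc (Suc k))"
    by (simp add: c_def field_simps)
  ultimately show ?case
    using primitive_field_increment[OF F_lipschitz F_bound Suc.prems c step]
      primitive_field_increment[OF G_lipschitz G_bound Suc.prems c step] by linarith
qed

lemma convergent_iter: "convergent (\<lambda>k. iter_x k t) \<and> convergent (\<lambda>k. iter_y k t)"
proof (cases "0 \<le> t")
  case True
  define a where "a k = 2 * B * t * (2 * L * t) ^ k / fact k" for k
  have sa: "summable a"
    using summable_mult[OF summable_exp[of "2 * L * t"], of "2 * B * t"]
    by (simp add: a_def[abs_def] field_simps)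
  have inc: "\<bar>iter_x (Suc k) t - iter_x k t\<bar> + \<bar>iter_y (Suc k) t - iter_y k t\<bar> \<le> a k" for k
  proof -
    have "0 \<le> a k" using True B_nonneg L_nonneg by (simp add: a_def)
    moreover have "2 * B * (2 * L) ^ k * t ^ Suc k / fact (Suc k) = a k / Suc k"
      by (simp add: a_def power_mult_distrib field_simps)
    ultimately have "2 * B * (2 * L) ^ k * t ^ Suc k / fact (Suc k) \<le> a k"
      by (simp add: divide_le_eq mult_le_cancel_left1)
    then show ?thesis using increment_iter[OF True, of k] by linarith
  qed
  have "summable (\<lambda>k. norm (iter_x (Suc k) t - iter_x k t))"
  proof (rule summable_comparison_test'[OF sa])
    show "norm (norm (iter_x (Suc k) t - iter_x k t)) \<le> a k" for k using inc[of k] by simp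
  qed
  moreover have "summable (\<lambda>k. norm (iter_y (Suc k) t - iter_y k t))"
  proof (rule summable_comparison_test'[OF sa])
    show "norm (norm (iter_y (Suc k) t - iter_y k t)) \<le> a k" for k using inc[of k] by simp
  qed
  ultimately show ?thesis by (simp add: convergent_if_summable_increments)
next
  case False
  then have "iter_x k t = x0 \<and> iter_y k t = y0" for k
    by (cases k) (simp_all add: iter_0 iter_Suc primitive_def set_lebesgue_integral_def)
  then show ?thesis by (simp add: convergent_const)
qed

definition lim_x :: "real \<Rightarrow> real" where "lim_x t = lim (\<lambda>k. iter_x k t)"
definition lim_y :: "real \<Rightarrow> real" where "lim_y t = lim (\<lambda>k. iter_y k t)"

lemma tendsto_lim_xy: "(\<lambda>k. iter_x k t) \<longlonglongrightarrow> lim_x t" "(\<lambda>k. iter_y k t) \<longlonglongrightarrow> lim_y t"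
  using convergent_iter[of t] by (simp_all add: lim_x_def lim_y_def convergent_LIMSEQ_iff)

lemma continuous_lim_xy: "continuous_on UNIV lim_x" "continuous_on UNIV lim_y"
proof -
  have "dist (lim_x a) (lim_x b) \<le> B * dist a b" "dist (lim_y a) (lim_y b) \<le> B * dist a b" for a b
    unfolding dist_real_def using lipschitz_iter
    by (intro LIMSEQ_le_const2[OF tendsto_rabs[OF tendsto_diff[OF tendsto_lim_xy(1)[of a]
            tendsto_lim_xy(1)[of b]]]]
        LIMSEQ_le_const2[OF tendsto_rabs[OF tendsto_diff[OF tendsto_lim_xy(2)[of a]
            tendsto_lim_xy(2)[of b]]]];
        blast)+
  then have "B-lipschitz_on UNIV lim_x" "B-lipschitz_on UNIV lim_y"
    using B_nonneg by (auto intro: lipschitz_onI)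
  then show "continuous_on UNIV lim_x" "continuous_on UNIV lim_y"
    by (auto intro: lipschitz_on_continuous_on)
qed

lemma tendsto_primitive_iter_field:
  assumes H_lip: "\<And>x y x' y'. \<bar>H x y - H x' y'\<bar> \<le> L * (\<bar>x - x'\<bar> + \<bar>y - y'\<bar>)"
    and H_bound: "\<And>x y. \<bar>H x y\<bar> \<le> B"
  shows "(\<lambda>k. primitive (\<lambda>s. H (iter_x k s) (iter_y k s)) t) \<longlonglongrightarrow> primitive (\<lambda>s. H (lim_x s) (lim_y s)) t"
proof (rule primitive_tendsto[OF measurable_iter_field[OF H_lip]
      measurable_field[OF H_lip continuous_lim_xy] H_bound])
  have "(\<lambda>k. H (iter_x k s) (iter_y k s)) \<longlonglongrightarrow> H (lim_x s) (lim_y s)" for s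
  proof (rule LIM_zero_cancel, rule Lim_null_comparison)
    show "\<forall>\<^sub>F k in sequentially. norm (H (iter_x k s) (iter_y k s) - H (lim_x s) (lim_y s))
        \<le> L * (\<bar>iter_x k s - lim_x s\<bar> + \<bar>iter_y k s - lim_y s\<bar>)"
      using H_lip by simp
    show "(\<lambda>k. L * (\<bar>iter_x k s - lim_x s\<bar> + \<bar>iter_y k s - lim_y s\<bar>)) \<longlonglongrightarrow> 0"
      using tendsto_mult_right_zero[OF tendsto_add_zero[OF
            tendsto_rabs_zero[OF LIM_zero[OF tendsto_lim_xy(1)]]
            tendsto_rabs_zero[OF LIM_zero[OF tendsto_lim_xy(2)]]]] .
  qed
  then show "AE s in lborel. s \<in> {0..t} \<longrightarrow> (\<lambda>k. H (iter_x k s) (iter_y k s)) \<longlonglongrightarrow> H (lim_x s) (lim_y s)"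
    by simp
qed

theorem integral_equation_solution:
  obtains x y where "continuous_on UNIV x" "continuous_on UNIV y"
    "\<And>t. x t = x0 + primitive (\<lambda>s. F (x s) (y s)) t"
    "\<And>t. y t = y0 + primitive (\<lambda>s. G (x s) (y s)) t"
proof (rule that[OF continuous_lim_xy])
  show "lim_x t = x0 + primitive (\<lambda>s. F (lim_x s) (lim_y s)) t" for t
  proof (rule LIMSEQ_unique[OF LIMSEQ_Suc[OF tendsto_lim_xy(1)]])
    show "(\<lambda>k. iter_x (Suc k) t) \<longlonglongrightarrow> x0 + primitive (\<lambda>s. F (lim_x s) (lim_y s)) t"
      unfolding iter_Suc by (intro tendsto_intros tendsto_primitive_iter_field[OF F_lipschitz F_bound])
  qed
  show "lim_y t = y0 + primitive (\<lambda>s. G (lim_x s) (lim_y s)) t" for t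
  proof (rule LIMSEQ_unique[OF LIMSEQ_Suc[OF tendsto_lim_xy(2)]])
    show "(\<lambda>k. iter_y (Suc k) t) \<longlonglongrightarrow> y0 + primitive (\<lambda>s. G (lim_x s) (lim_y s)) t"
      unfolding iter_Suc by (intro tendsto_intros tendsto_primitive_iter_field[OF G_lipschitz G_bound])
  qed
qed

end

section \<open>Convex combinations of tails\<close>

lemma AE_summable_if_summable_integral_norm:
  fixes f :: "nat \<Rightarrow> 'a \<Rightarrow> 'b::{banach, second_countable_topology}"
  assumes "\<And>i. integrable M (f i)"
    and "summable (\<lambda>i. \<integral>x. norm (f i x) \<partial>M)"
  shows "AE x in M. summable (\<lambda>i. norm (f i x))"
proof -
  have [measurable]: "f i \<in> borel_measurable M" for i
    using assms(1) by (rule borel_measurable_integrable)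
  have "(\<integral>\<^sup>+ x. (\<Sum>i. ennreal (norm (f i x))) \<partial>M) = (\<Sum>i. \<integral>\<^sup>+ x. norm (f i x) \<partial>M)"
    by (rule nn_integral_suminf) measurable
  also have "\<dots> = (\<Sum>i. ennreal (\<integral>x. norm (f i x) \<partial>M))"
    by (intro arg_cong[where f=suminf] ext nn_integral_eq_integral integrable_norm assms(1)) simp
  also have "\<dots> \<noteq> \<infinity>"
    by (rule ennreal_suminf_neq_top[OF assms(2), folded infinity_ennreal_def]) simp
  finally have "AE x in M. (\<Sum>i. ennreal (norm (f i x))) \<noteq> \<infinity>"
    by (rule nn_integral_PInf_AE[rotated]) measurable
  then show ?thesis
    by eventually_elim (auto intro: summable_suminf_not_top)
qed

lemma integrable_bounded_support:
  fixes g :: "real \<Rightarrow> 'a::{banach, second_countable_topology}"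
  assumes "S \<in> sets lborel" "emeasure lborel S < \<infinity>" "g \<in> borel_measurable lborel"
    and "\<And>t. norm (g t) \<le> C" "\<And>t. t \<notin> S \<Longrightarrow> g t = 0"
  shows "integrable lborel g"
  by (rule integrableI_bounded_set[where A=S and B=C]) (use assms in auto)

lemma integral_le_square_integral:
  fixes h :: "real \<Rightarrow> real"
  assumes S: "S \<in> sets lborel" "emeasure lborel S < \<infinity>"
    and int: "integrable lborel h" "integrable lborel (\<lambda>t. (h t)\<^sup>2)"
    and support: "\<And>t. t \<notin> S \<Longrightarrow> h t = 0" and r: "0 < r"
  shows "(\<integral>t. h t \<partial>lborel) \<le> r / 2 * measure lborel S + (\<integral>t. (h t)\<^sup>2 \<partial>lborel) / (2 * r)"
proof -
  have "h t \<le> r / 2 * indicator S t + (h t)\<^sup>2 / (2 * r)" for t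
  proof (cases "t \<in> S")
    case True
    have "2 * r * h t \<le> r\<^sup>2 + (h t)\<^sup>2" using sum_squares_bound[of r "h t"]
      by (simp add: power2_eq_square)
    then show ?thesis using True r by (simp add: field_simps power2_eq_square)
  qed (simp add: support)
  then have "(\<integral>t. h t \<partial>lborel) \<le> (\<integral>t. r / 2 * indicator S t + (h t)\<^sup>2 / (2 * r) \<partial>lborel)"
    using S int by (intro integral_mono Bochner_Integration.integrable_add integrable_mult_right
        integrable_divide_zero integrable_real_indicator) (auto simp: less_top)
  also have "\<dots> = r / 2 * measure lborel S + (\<integral>t. (h t)\<^sup>2 \<partial>lborel) / (2 * r)"
    using S int by (subst Bochner_Integration.integral_add) (auto simp: less_top)
  finally show ?thesis .
qed

lemma AE_convergent_if_square_increments_small: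
  fixes g :: "nat \<Rightarrow> real \<Rightarrow> 'a::euclidean_space"
  assumes S: "S \<in> sets lborel" "emeasure lborel S < \<infinity>"
    and [measurable]: "\<And>k. g k \<in> borel_measurable lborel"
    and bound: "\<And>k t. norm (g k t) \<le> B" and support: "\<And>k t. t \<notin> S \<Longrightarrow> g k t = 0"
    and small: "\<And>k. (\<integral>t. (norm (g (Suc k) t - g k t))\<^sup>2 \<partial>lborel) \<le> (1/4) ^ k"
  shows "AE t in lborel. convergent (\<lambda>k. g k t)"
proof -
  define \<mu> where "\<mu> = measure lborel S"
  have \<Delta>_bound: "norm (g (Suc k) t - g k t) \<le> 2 * B" for k t
    using bound[of "Suc k" t] bound[of k t] norm_triangle_ineq4 by (smt (verit))
  have int_diff: "integrable lborel (\<lambda>t. g (Suc k) t - g k t)" for k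
    by (rule integrable_bounded_support[OF S _ \<Delta>_bound]) (use support in simp_all)
  have "(norm (g (Suc k) t - g k t))\<^sup>2 \<le> (2 * B)\<^sup>2" for k t
    using \<Delta>_bound by (intro power_mono) auto
  then have int2: "integrable lborel (\<lambda>t. (norm (g (Suc k) t - g k t))\<^sup>2)" for k
    by (intro integrable_bounded_support[OF S, where C="(2 * B)\<^sup>2"]) (auto simp: support)
  have L1: "(\<integral>t. norm (g (Suc k) t - g k t) \<partial>lborel) \<le> (\<mu> + 1) / 2 * (1/2) ^ k" for k
  proof -
    define r :: real where "r = (1/2) ^ k"
    have r: "0 < r" by (simp add: r_def)
    have "(\<integral>t. norm (g (Suc k) t - g k t) \<partial>lborel)
        \<le> r / 2 * \<mu> + (\<integral>t. (norm (g (Suc k) t - g k t))\<^sup>2 \<partial>lborel) / (2 * r)"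
      unfolding \<mu>_def by (rule integral_le_square_integral[OF S integrable_norm[OF int_diff] int2 _ r])
        (simp add: support)
    also have "\<dots> \<le> r / 2 * \<mu> + r * r / (2 * r)"
      using small[of k] r
      by (intro add_left_mono divide_right_mono) (auto simp: r_def power_mult_distrib[symmetric])
    also have "\<dots> = (\<mu> + 1) / 2 * (1/2) ^ k" using r by (simp add: r_def field_simps)
    finally show ?thesis .
  qed
  have "summable (\<lambda>k. (\<integral>t. norm (g (Suc k) t - g k t) \<partial>lborel))"
    by (rule summable_comparison_test'[of "\<lambda>k. (\<mu> + 1) / 2 * (1/2) ^ k" 0])
      (use L1 in \<open>auto intro: summable_mult summable_geometric\<close>)
  then have "AE t in lborel. summable (\<lambda>k. norm (g (Suc k) t - g k t))"
    by (rule AE_summable_if_summable_integral_norm[OF int_diff])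
  then show ?thesis by eventually_elim (rule convergent_if_summable_increments)
qed

lemma norm_diff_square_midpoint:
  fixes a b :: "'a::real_inner"
  shows "(norm (a - b))\<^sup>2 = 2 * (norm a)\<^sup>2 + 2 * (norm b)\<^sup>2 - 4 * (norm ((1/2) *\<^sub>R (a + b)))\<^sup>2"
  by (simp add: power2_norm_eq_inner inner_diff_left inner_diff_right inner_add_left inner_add_right
      inner_commute algebra_simps)

lemma tendsto_zero_fast_subsequence:
  fixes \<epsilon> :: "nat \<Rightarrow> real"
  assumes "\<epsilon> \<longlonglongrightarrow> 0" "0 < r"
  obtains \<sigma> where "\<And>k. \<sigma> k \<le> \<sigma> (Suc k)" "\<And>k. k \<le> \<sigma> k" "\<And>k. \<epsilon> (\<sigma> k) \<le> r ^ k"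
proof -
  have "\<forall>k. \<exists>N. \<forall>m\<ge>N. \<epsilon> m < r ^ k"
    using order_tendstoD(2)[OF assms(1), of "r ^ _"] assms(2) by (auto simp: eventually_sequentially)
  then obtain N where "\<And>k m. N k \<le> m \<Longrightarrow> \<epsilon> m < r ^ k" by metis
  then have N: "\<And>k m. N k \<le> m \<Longrightarrow> \<epsilon> m \<le> r ^ k" by (simp add: less_imp_le)
  show ?thesis
  proof
    show "k + (\<Sum>i\<le>k. N i) \<le> Suc k + (\<Sum>i\<le>Suc k. N i)" for k by simp
    show "k \<le> k + (\<Sum>i\<le>k. N i)" for k by simp
    have "N k \<le> (\<Sum>i\<le>k. N i)" for k by (rule member_le_sum) auto
    then show "\<epsilon> (k + (\<Sum>i\<le>k. N i)) \<le> r ^ k" for k by (intro N) (simp add: trans_le_add2)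
  qed
qed

definition tail_weights :: "(nat \<Rightarrow> nat \<Rightarrow> real) \<Rightarrow> (nat \<Rightarrow> nat) \<Rightarrow> bool" where
  "tail_weights w N \<longleftrightarrow> (\<forall>k j. 0 \<le> w k j) \<and> (\<forall>k. (\<Sum>j<N k. w k j) = 1) \<and> (\<forall>k j. j < k \<longrightarrow> w k j = 0)"

lemma tail_weights_tendsto:
  fixes X :: "nat \<Rightarrow> real"
  assumes "tail_weights w N" "X \<longlonglongrightarrow> L"
  shows "(\<lambda>k. \<Sum>j<N k. w k j * X j) \<longlonglongrightarrow> L"
proof (rule LIMSEQ_I)
  fix r :: real assume "0 < r"
  then obtain n0 where n0: "\<And>n. n0 \<le> n \<Longrightarrow> norm (X n - L) < r / 2"
    using LIMSEQ_D[OF assms(2), of "r / 2"] by auto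
  have w: "\<And>k j. 0 \<le> w k j" "\<And>k. (\<Sum>j<N k. w k j) = 1" "\<And>k j. j < k \<Longrightarrow> w k j = 0"
    using assms(1) by (auto simp: tail_weights_def)
  have "norm ((\<Sum>j<N k. w k j * X j) - L) < r" if "n0 \<le> k" for k
  proof -
    have "(\<Sum>j<N k. w k j * X j) - L = (\<Sum>j<N k. w k j * (X j - L))"
      using w(2)[of k] by (simp add: right_diff_distrib sum_subtractf sum_distrib_right[symmetric])
    also have "\<bar>\<dots>\<bar> \<le> (\<Sum>j<N k. w k j * (r / 2))"
    proof (rule order_trans[OF sum_abs sum_mono])
      fix j
      show "\<bar>w k j * (X j - L)\<bar> \<le> w k j * (r / 2)"
      proof (cases "j < k")
        case False
        then have "\<bar>X j - L\<bar> \<le> r / 2" using n0[of j] that by simp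
        then have "w k j * \<bar>X j - L\<bar> \<le> w k j * (r / 2)" using w(1)[of k j] by (rule mult_left_mono)
        then show ?thesis using w(1)[of k j] by (simp add: abs_mult)
      qed (simp add: w(3))
    qed
    also have "\<dots> = (\<Sum>j<N k. w k j) * (r / 2)" by (rule sum_distrib_right[symmetric])
    also have "\<dots> = r / 2" using w(2)[of k] by simp
    finally show ?thesis using \<open>0 < r\<close> by simp
  qed
  then show "\<exists>no. \<forall>n\<ge>no. norm ((\<Sum>j<N n. w n j * X j) - L) < r" by blast
qed

lemma tail_weights_between:
  fixes a :: "nat \<Rightarrow> real"
  assumes "tail_weights w N" "\<And>j. lo \<le> a j \<and> a j \<le> hi"
  shows "lo \<le> (\<Sum>j<N k. w k j * a j) \<and> (\<Sum>j<N k. w k j * a j) \<le> hi"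
proof -
  have w: "\<And>j. 0 \<le> w k j" "(\<Sum>j<N k. w k j) = 1" using assms(1) by (auto simp: tail_weights_def)
  have "(\<Sum>j<N k. w k j * lo) \<le> (\<Sum>j<N k. w k j * a j)" "(\<Sum>j<N k. w k j * a j) \<le> (\<Sum>j<N k. w k j * hi)"
    using w assms(2) by (auto intro!: sum_mono mult_left_mono)
  then show ?thesis using w(2) by (simp add: sum_distrib_right[symmetric])
qed

lemma tail_weights_norm_le:
  fixes x :: "nat \<Rightarrow> 'a::real_normed_vector"
  assumes w: "tail_weights w N" and "\<And>j. norm (x j) \<le> B"
  shows "norm (\<Sum>j<N k. w k j *\<^sub>R x j) \<le> B"
proof -
  have "norm (\<Sum>j<N k. w k j *\<^sub>R x j) \<le> (\<Sum>j<N k. w k j * norm (x j))"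
    using w by (auto simp: tail_weights_def intro!: order_trans[OF norm_sum] sum_mono)
  also have "\<dots> \<le> B"
    using tail_weights_between[OF w, where a="\<lambda>j. norm (x j)" and lo=0 and hi=B] assms(2) by auto
  finally show ?thesis .
qed

lemma tail_weights_norm_square:
  fixes x :: "nat \<Rightarrow> 'a::real_normed_vector"
  assumes "tail_weights w N"
  shows "(norm (\<Sum>j<N k. w k j *\<^sub>R x j))\<^sup>2 \<le> (\<Sum>j<N k. w k j * (norm (x j))\<^sup>2)"
proof -
  have w: "\<And>j. 0 \<le> w k j" "(\<Sum>j<N k. w k j) = 1" using assms by (auto simp: tail_weights_def)
  define m where "m = (\<Sum>j<N k. w k j * norm (x j))"
  have "norm (\<Sum>j<N k. w k j *\<^sub>R x j) \<le> m"
    unfolding m_def using w(1) by (auto intro!: order_trans[OF norm_sum] sum_mono)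
  then have "(norm (\<Sum>j<N k. w k j *\<^sub>R x j))\<^sup>2 \<le> m\<^sup>2" by (intro power_mono) auto
  also have "m\<^sup>2 \<le> (\<Sum>j<N k. w k j * (norm (x j))\<^sup>2)"
  proof -
    have "0 \<le> (\<Sum>j<N k. w k j * (norm (x j) - m)\<^sup>2)" using w by (intro sum_nonneg) auto
    also have "\<dots> = (\<Sum>j<N k. w k j * (norm (x j))\<^sup>2) - 2 * m * m + m\<^sup>2 * (\<Sum>j<N k. w k j)"
      by (simp add: m_def power2_diff algebra_simps sum.distrib sum_subtractf
          sum_distrib_left sum_distrib_right)
    finally show ?thesis using w(2) by (simp add: power2_eq_square)
  qed
  finally show ?thesis .
qed

text \<open>A Mazur-type lemma in \<open>L\<^sup>2\<close>: among the convex combinations of the tail \<open>x n, x (n+1), \<dots>\<close>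
  the infimal energy \<open>tail_energy n\<close> increases with \<open>n\<close>; by the parallelogram law, near-minimisers
  for large \<open>n\<close> form an \<open>L\<^sup>2\<close>-Cauchy sequence, a fast subsequence of which converges a.e.\<close>

locale tail_combinations =
  fixes S :: "real set" and x :: "nat \<Rightarrow> real \<Rightarrow> 'a::euclidean_space" and B :: real
  assumes S: "S \<in> sets lborel" "emeasure lborel S < \<infinity>"
    and x_measurable [measurable]: "\<And>j. x j \<in> borel_measurable lborel"
    and x_bound: "\<And>j t. norm (x j t) \<le> B"
    and x_support: "\<And>j t. t \<notin> S \<Longrightarrow> x j t = 0"
begin

definition combination :: "nat \<times> (nat \<Rightarrow> real) \<Rightarrow> real \<Rightarrow> 'a" where
  "combination c t = (\<Sum>j<fst c. snd c j *\<^sub>R x j t)"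

definition is_tail_combination :: "nat \<Rightarrow> nat \<times> (nat \<Rightarrow> real) \<Rightarrow> bool" where
  "is_tail_combination n c \<longleftrightarrow> (\<forall>j. 0 \<le> snd c j) \<and> (\<forall>j<n. snd c j = 0) \<and>
     (\<forall>j\<ge>fst c. snd c j = 0) \<and> (\<Sum>j<fst c. snd c j) = 1"

definition energy :: "nat \<times> (nat \<Rightarrow> real) \<Rightarrow> real" where
  "energy c = (\<integral>t. (norm (combination c t))\<^sup>2 \<partial>lborel)"

definition tail_energy :: "nat \<Rightarrow> real" where
  "tail_energy n = Inf (energy ` Collect (is_tail_combination n))"

lemma measurable_combination [measurable]: "combination c \<in> borel_measurable lborel"
  unfolding combination_def by measurable

lemma combination_outside: "t \<notin> S \<Longrightarrow> combination c t = 0"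
  unfolding combination_def by (simp add: x_support)

lemma norm_combination_le:
  assumes "is_tail_combination n c"
  shows "norm (combination c t) \<le> B"
proof -
  have "norm (combination c t) \<le> (\<Sum>j<fst c. snd c j * B)"
    unfolding combination_def using assms x_bound
    by (auto simp: is_tail_combination_def intro!: order_trans[OF norm_sum] sum_mono mult_left_mono)
  also have "\<dots> = B" using assms by (simp add: is_tail_combination_def sum_distrib_right[symmetric])
  finally show ?thesis .
qed

lemma integrable_square_combination:
  assumes "is_tail_combination n c"
  shows "integrable lborel (\<lambda>t. (norm (combination c t))\<^sup>2)"
  by (rule integrable_bounded_support[OF S, where C="B\<^sup>2"])
    (use norm_combination_le[OF assms] in \<open>auto simp: combination_outside intro: power_mono\<close>)

lemma is_tail_combination_mono: "is_tail_combination m c \<Longrightarrow> n \<le> m \<Longrightarrow> is_tail_combination n c"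
  by (auto simp: is_tail_combination_def)

lemma is_tail_combination_single: "is_tail_combination n (Suc n, \<lambda>j. if j = n then 1 else 0)"
  by (auto simp: is_tail_combination_def)

lemma tail_combination_midpoint:
  assumes "is_tail_combination n c" "is_tail_combination n d"
  defines "m \<equiv> (max (fst c) (fst d), \<lambda>j. (snd c j + snd d j) / 2)"
  shows "is_tail_combination n m" "combination m t = (1/2) *\<^sub>R (combination c t + combination d t)"
proof -
  have extend: "(\<Sum>j<max (fst c) (fst d). f (snd e j) j) = (\<Sum>j<fst e. f (snd e j) j)"
    if "e = c \<or> e = d" "\<And>j. f 0 j = 0" for e and f :: "real \<Rightarrow> nat \<Rightarrow> 'b::comm_monoid_add"
    by (rule sum.mono_neutral_right) (use assms(1,2) that in \<open>auto simp: is_tail_combination_def\<close>)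
  have "(\<Sum>j<max (fst c) (fst d). snd c j) = 1" "(\<Sum>j<max (fst c) (fst d). snd d j) = 1"
    using extend[of c "\<lambda>a _. a"] extend[of d "\<lambda>a _. a"] assms(1,2)
    by (auto simp: is_tail_combination_def)
  then show "is_tail_combination n m"
    using assms(1,2)
    by (auto simp: is_tail_combination_def m_def sum_divide_distrib[symmetric] sum.distrib)
  have "combination m t = (1/2) *\<^sub>R ((\<Sum>j<max (fst c) (fst d). snd c j *\<^sub>R x j t) +
      (\<Sum>j<max (fst c) (fst d). snd d j *\<^sub>R x j t))"
    by (simp add: combination_def m_def sum.distrib[symmetric] scaleR_sum_right add_divide_distrib
        scaleR_add_left scaleR_add_right)
  also have "\<dots> = (1/2) *\<^sub>R (combination c t + combination d t)"
    using extend[of c "\<lambda>a j. a *\<^sub>R x j t"] extend[of d "\<lambda>a j. a *\<^sub>R x j t"]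
    by (simp add: combination_def)
  finally show "combination m t = (1/2) *\<^sub>R (combination c t + combination d t)" .
qed

lemma energy_nonneg: "0 \<le> energy c"
  unfolding energy_def by (rule integral_nonneg_AE) auto

lemma energy_le:
  assumes "is_tail_combination n c"
  shows "energy c \<le> B\<^sup>2 * measure lborel S"
proof -
  have "energy c \<le> (\<integral>t. B\<^sup>2 * indicator S t \<partial>lborel)"
    unfolding energy_def
  proof (rule integral_mono[OF integrable_square_combination[OF assms]])
    show "integrable lborel (\<lambda>t. B\<^sup>2 * indicator S t)"
      using S by (intro integrable_mult_right) (simp add: less_top)
    show "(norm (combination c t))\<^sup>2 \<le> B\<^sup>2 * indicator S t" for t
      using norm_combination_le[OF assms, of t] combination_outside[of t c]
      by (cases "t \<in> S") (auto intro: power_mono)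
  qed
  also have "\<dots> = B\<^sup>2 * measure lborel S" using S by (simp add: less_top)
  finally show ?thesis .
qed

lemma bdd_below_energy: "bdd_below (energy ` Collect (is_tail_combination n))"
  by (rule bdd_belowI[where m=0]) (auto simp: energy_nonneg)

lemma tail_energy_le: "is_tail_combination n c \<Longrightarrow> tail_energy n \<le> energy c"
  unfolding tail_energy_def by (rule cInf_lower[OF _ bdd_below_energy]) auto

lemma tail_energy_mono: "n \<le> m \<Longrightarrow> tail_energy n \<le> tail_energy m"
  unfolding tail_energy_def
  using is_tail_combination_single[of m] is_tail_combination_mono[of m _ n]
  by (intro cInf_superset_mono bdd_below_energy) auto

lemma tail_energy_bounded: "tail_energy n \<le> B\<^sup>2 * measure lborel S"
  using tail_energy_le[OF is_tail_combination_single] energy_le[OF is_tail_combination_single]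
  by (rule order_trans)

lemma near_minimal_tail_combination:
  "\<exists>c. is_tail_combination n c \<and> energy c < tail_energy n + 1 / Suc n"
proof -
  have "Inf (energy ` Collect (is_tail_combination n)) < tail_energy n + 1 / Suc n"
    by (simp add: tail_energy_def)
  then show ?thesis
    using cInf_lessD[of "energy ` Collect (is_tail_combination n)"] is_tail_combination_single
    by blast
qed

lemma distance_square_le:
  assumes "is_tail_combination n c" "is_tail_combination n d"
  shows "(\<integral>t. (norm (combination c t - combination d t))\<^sup>2 \<partial>lborel)
    \<le> 2 * energy c + 2 * energy d - 4 * tail_energy n"
proof -
  define m where "m = (max (fst c) (fst d), \<lambda>j. (snd c j + snd d j) / 2)"
  note mid = tail_combination_midpoint[OF assms, folded m_def]
  have "(\<integral>t. (norm (combination c t - combination d t))\<^sup>2 \<partial>lborel)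
      = 2 * energy c + 2 * energy d - 4 * energy m"
    unfolding norm_diff_square_midpoint mid(2)[symmetric] energy_def
    using integrable_square_combination[OF assms(1)] integrable_square_combination[OF assms(2)]
      integrable_square_combination[OF mid(1)] by simp
  also have "\<dots> \<le> 2 * energy c + 2 * energy d - 4 * tail_energy n"
    using tail_energy_le[OF mid(1)] by simp
  finally show ?thesis .
qed

theorem AE_convergent_tail_combinations:
  obtains w N where "tail_weights w N" "AE t in lborel. convergent (\<lambda>k. \<Sum>j<N k. w k j *\<^sub>R x j t)"
proof -
  define D where "D = (SUP n. tail_energy n)"
  have bdd: "bdd_above (range tail_energy)"
    by (rule bdd_aboveI[where M="B\<^sup>2 * measure lborel S"]) (auto simp: tail_energy_bounded)
  have "tail_energy \<longlonglongrightarrow> D"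
    unfolding D_def by (rule LIMSEQ_incseq_SUP[OF bdd]) (auto simp: incseq_def tail_energy_mono)
  obtain c where c: "\<And>n. is_tail_combination n (c n)"
    and c_energy: "\<And>n. energy (c n) < tail_energy n + 1 / Suc n"
    using near_minimal_tail_combination by metis
  define \<epsilon> where "\<epsilon> n = 2 * (D - tail_energy n) + 4 / Suc n" for n
  have cauchy: "(\<integral>t. (norm (combination (c n) t - combination (c m) t))\<^sup>2 \<partial>lborel) \<le> \<epsilon> n"
    if "n \<le> m" for n m
  proof -
    have "1 / real (Suc m) \<le> 1 / Suc n" using that by (simp add: frac_le)
    then have "energy (c m) \<le> D + 1 / Suc n"
      using c_energy[of m] cSUP_upper[OF UNIV_I bdd, of m] by (simp add: D_def)
    then show ?thesis
      using distance_square_le[OF c is_tail_combination_mono[OF c that]] c_energy[of n]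
      by (simp add: \<epsilon>_def)
  qed
  have "\<epsilon> \<longlonglongrightarrow> 2 * (D - D) + 4 * 0"
    unfolding \<epsilon>_def divide_inverse
    by (intro tendsto_intros \<open>tail_energy \<longlonglongrightarrow> D\<close> LIMSEQ_inverse_real_of_nat)
  then obtain \<sigma> where \<sigma>: "\<And>k. \<sigma> k \<le> \<sigma> (Suc k)" "\<And>k. k \<le> \<sigma> k" "\<And>k. \<epsilon> (\<sigma> k) \<le> (1/4) ^ k"
    using tendsto_zero_fast_subsequence[of \<epsilon> "1/4"] by auto
  have "AE t in lborel. convergent (\<lambda>k. combination (c (\<sigma> k)) t)"
  proof (rule AE_convergent_if_square_increments_small[OF S])
    show "norm (combination (c (\<sigma> k)) t) \<le> B" for k t by (rule norm_combination_le[OF c])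
    show "(\<integral>t. (norm (combination (c (\<sigma> (Suc k))) t - combination (c (\<sigma> k)) t))\<^sup>2 \<partial>lborel)
        \<le> (1/4) ^ k" for k
      using order_trans[OF cauchy[OF \<sigma>(1)] \<sigma>(3)] by (simp add: norm_minus_commute)
  qed (auto simp: combination_outside)
  moreover have "tail_weights (\<lambda>k. snd (c (\<sigma> k))) (\<lambda>k. fst (c (\<sigma> k)))"
    using c \<sigma>(2) by (auto simp: tail_weights_def is_tail_combination_def less_le_trans)
  ultimately show ?thesis using that by (auto simp: combination_def)
qed

end

section \<open>Limits of controlled linear equations\<close>

lemma equilipschitz_convergent_subsequence:
  fixes u :: "nat \<Rightarrow> real \<Rightarrow> 'a::euclidean_space"
  assumes "compact S" "\<And>n x. x \<in> S \<Longrightarrow> norm (u n x) \<le> B"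
    and lip: "\<And>n x y. x \<in> S \<Longrightarrow> y \<in> S \<Longrightarrow> norm (u n x - u n y) \<le> L * \<bar>x - y\<bar>"
  obtains r g where "strict_mono r" "continuous_on S g" "\<And>x. x \<in> S \<Longrightarrow> (\<lambda>n. u (r n) x) \<longlonglongrightarrow> g x"
proof -
  have equicont: "\<exists>d. 0 < d \<and> (\<forall>n y. y \<in> S \<and> norm (x - y) < d \<longrightarrow> norm (u n x - u n y) < e)"
    if "x \<in> S" "0 < e" for x e
  proof (intro exI conjI allI impI)
    show "0 < e / (\<bar>L\<bar> + 1)" using \<open>0 < e\<close> by simp
    fix n y assume y: "y \<in> S \<and> norm (x - y) < e / (\<bar>L\<bar> + 1)"
    have "norm (u n x - u n y) \<le> (\<bar>L\<bar> + 1) * \<bar>x - y\<bar>"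
      using lip[OF \<open>x \<in> S\<close>, of y n] y
        mult_right_mono[of L "\<bar>L\<bar> + 1" "\<bar>x - y\<bar>"] by linarith
    also have "\<dots> < (\<bar>L\<bar> + 1) * (e / (\<bar>L\<bar> + 1))"
      using y by (intro mult_strict_left_mono) auto
    finally show "norm (u n x - u n y) < e" by simp
  qed
  obtain g r where "continuous_on S g" "strict_mono (r :: nat \<Rightarrow> nat)"
    and unif: "\<And>e. 0 < e \<Longrightarrow> \<exists>N. \<forall>n x. n \<ge> N \<and> x \<in> S \<longrightarrow> norm (u (r n) x - g x) < e"
  proof (rule Arzela_Ascoli[OF assms(1,2) equicont])
    fix g k assume "continuous_on S g" "strict_mono (k :: nat \<Rightarrow> nat)"
      "\<And>e. 0 < e \<Longrightarrow> \<exists>N. \<forall>n x. n \<ge> N \<and> x \<in> S \<longrightarrow> norm (u (k n) x - g x) < e"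
    then show thesis by (rule that)
  qed
  moreover have "(\<lambda>n. u (r n) x) \<longlonglongrightarrow> g x" if "x \<in> S" for x
  proof (rule LIMSEQ_I)
    fix e :: real assume "0 < e"
    then show "\<exists>N. \<forall>n\<ge>N. norm (u (r n) x - g x) < e" using unif[of e] that by blast
  qed
  ultimately show ?thesis using that by blast
qed

lemma abs_mult_unit_le: "a \<in> {0..1} \<Longrightarrow> \<bar>b\<bar> \<le> B \<Longrightarrow> \<bar>a * b\<bar> \<le> (B::real)"
  using mult_mono[of "\<bar>a\<bar>" 1 "\<bar>b\<bar>" B] by (auto simp: abs_mult)

lemma control_term_tendsto:
  fixes x e R :: "nat \<Rightarrow> real \<Rightarrow> real"
  assumes [measurable]: "\<And>j. x j \<in> borel_measurable lborel" "\<And>j. e j \<in> borel_measurable lborel"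
      "\<And>j. R j \<in> borel_measurable lborel" "X \<in> borel_measurable lborel" "Rl \<in> borel_measurable lborel"
    and x_bound: "\<And>j s. \<bar>x j s\<bar> \<le> M" and R_bound: "\<And>j s. \<bar>R j s\<bar> \<le> C"
    and e_range: "\<And>j s. e j s \<in> {0..1}"
    and x_lim: "\<And>s. (\<lambda>j. x j s) \<longlonglongrightarrow> X s" and R_lim: "\<And>s. (\<lambda>j. R j s) \<longlonglongrightarrow> Rl s"
    and eq: "\<And>j. x j t = x0 + primitive (\<lambda>s. R j s - e j s * x j s) t"
  shows "(\<lambda>j. primitive (\<lambda>s. e j s * X s) t) \<longlonglongrightarrow> x0 + primitive Rl t - X t"
proof -
  have X_bound: "\<bar>X s\<bar> \<le> M" for s
    using x_bound by (intro LIMSEQ_le_const2[OF tendsto_rabs[OF x_lim]]) auto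
  have diff_bound: "\<bar>x j s - X s\<bar> \<le> 2 * M" for j s using x_bound[of j s] X_bound[of s] by linarith
  have split: "primitive (\<lambda>s. e j s * X s) t
      = x0 + primitive (R j) t - x j t - primitive (\<lambda>s. e j s * (x j s - X s)) t" for j
  proof -
    have "primitive (\<lambda>s. e j s * X s) t = primitive (\<lambda>s. e j s * x j s - e j s * (x j s - X s)) t"
      by (intro primitive_cong) (simp add: algebra_simps)
    also have "\<dots> = primitive (\<lambda>s. e j s * x j s) t - primitive (\<lambda>s. e j s * (x j s - X s)) t"
      by (intro primitive_diff set_integrable_bounded[where B=M] set_integrable_bounded[where B="2 * M"]
          abs_mult_unit_le e_range x_bound
          diff_bound; measurable)
    also have "primitive (\<lambda>s. e j s * x j s) t = primitive (R j) t - (x j t - x0)"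
    proof -
      have "primitive (\<lambda>s. R j s - e j s * x j s) t
          = primitive (R j) t - primitive (\<lambda>s. e j s * x j s) t"
        by (intro primitive_diff set_integrable_bounded[OF _ R_bound] set_integrable_bounded[where B=M]
            abs_mult_unit_le e_range x_bound; measurable)
      then show ?thesis using eq[of j] by simp
    qed
    finally show ?thesis by simp
  qed
  have "(\<lambda>j. primitive (\<lambda>s. e j s * (x j s - X s)) t) \<longlonglongrightarrow> primitive (\<lambda>s. 0) t"
  proof (rule primitive_tendsto[where C="2 * M"])
    show "\<bar>e j s * (x j s - X s)\<bar> \<le> 2 * M" for j s
      by (rule abs_mult_unit_le[OF e_range diff_bound])
    have "(\<lambda>j. e j s * (x j s - X s)) \<longlonglongrightarrow> 0" for s
    proof (rule Lim_null_comparison)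
      show "\<forall>\<^sub>F j in sequentially. norm (e j s * (x j s - X s)) \<le> \<bar>x j s - X s\<bar>"
        using abs_mult_unit_le[OF e_range order_refl] by simp
      show "(\<lambda>j. \<bar>x j s - X s\<bar>) \<longlonglongrightarrow> 0"
        using tendsto_rabs_zero[OF LIM_zero[OF x_lim]] .
    qed
    then show "AE s in lborel. s \<in> {0..t} \<longrightarrow> (\<lambda>j. e j s * (x j s - X s)) \<longlonglongrightarrow> 0" by simp
  qed measurable
  moreover have "(\<lambda>j. primitive (R j) t) \<longlonglongrightarrow> primitive Rl t"
    by (rule primitive_tendsto[OF _ _ R_bound]) (use R_lim in auto)
  ultimately have "(\<lambda>j. x0 + primitive (R j) t - x j t - primitive (\<lambda>s. e j s * (x j s - X s)) t)
      \<longlonglongrightarrow> x0 + primitive Rl t - X t - primitive (\<lambda>s. 0) t"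
    by (intro tendsto_diff tendsto_add tendsto_const x_lim)
  then show ?thesis unfolding split by (simp add: primitive_def)
qed

text \<open>The control enters linearly, so the equation survives passing to tail averages of the controls,
  which converge pointwise.\<close>
lemma linear_control_equation_limit:
  fixes x e R :: "nat \<Rightarrow> real \<Rightarrow> real"
  assumes [measurable]: "\<And>j. x j \<in> borel_measurable lborel" "\<And>j. e j \<in> borel_measurable lborel"
      "\<And>j. R j \<in> borel_measurable lborel" "X \<in> borel_measurable lborel"
      "Rl \<in> borel_measurable lborel" "\<eta> \<in> borel_measurable lborel"
    and x_bound: "\<And>j s. \<bar>x j s\<bar> \<le> M" and R_bound: "\<And>j s. \<bar>R j s\<bar> \<le> C"
    and e_range: "\<And>j s. e j s \<in> {0..1}" and \<eta>_range: "\<And>s. \<eta> s \<in> {0..1}"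
    and x_lim: "\<And>s. (\<lambda>j. x j s) \<longlonglongrightarrow> X s" and R_lim: "\<And>s. (\<lambda>j. R j s) \<longlonglongrightarrow> Rl s"
    and w: "tail_weights w N"
    and AE_lim: "AE s in lborel. s \<in> {0..t} \<longrightarrow> (\<lambda>k. \<Sum>j<N k. w k j * e j s) \<longlonglongrightarrow> \<eta> s"
    and eq: "\<And>j. x j t = x0 + primitive (\<lambda>s. R j s - e j s * x j s) t"
  shows "X t = x0 + primitive (\<lambda>s. Rl s - \<eta> s * X s) t"
proof -
  have X_bound: "\<bar>X s\<bar> \<le> M" for s
    using x_bound by (intro LIMSEQ_le_const2[OF tendsto_rabs[OF x_lim]]) auto
  have Rl_bound: "\<bar>Rl s\<bar> \<le> C" for s
    using R_bound by (intro LIMSEQ_le_const2[OF tendsto_rabs[OF R_lim]]) auto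
  define A where "A = x0 + primitive Rl t - X t"
  have "(\<lambda>k. \<Sum>j<N k. w k j * primitive (\<lambda>s. e j s * X s) t) \<longlonglongrightarrow> A"
    unfolding A_def
    by (rule tail_weights_tendsto[OF w
          control_term_tendsto[OF assms(1-5) x_bound R_bound e_range x_lim R_lim eq]])
  moreover have "(\<Sum>j<N k. w k j * primitive (\<lambda>s. e j s * X s) t)
      = primitive (\<lambda>s. (\<Sum>j<N k. w k j * e j s) * X s) t" for k
  proof -
    have "(\<Sum>j<N k. w k j * primitive (\<lambda>s. e j s * X s) t)
        = primitive (\<lambda>s. \<Sum>j<N k. w k j * (e j s * X s)) t"
      by (rule primitive_sum[symmetric])
        (intro set_integrable_bounded[where B=M] abs_mult_unit_le e_range X_bound; measurable)
    also have "\<dots> = primitive (\<lambda>s. (\<Sum>j<N k. w k j * e j s) * X s) t"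
      by (simp add: sum_distrib_right mult.assoc)
    finally show ?thesis .
  qed
  ultimately have "(\<lambda>k. primitive (\<lambda>s. (\<Sum>j<N k. w k j * e j s) * X s) t) \<longlonglongrightarrow> A" by simp
  moreover have "(\<lambda>k. primitive (\<lambda>s. (\<Sum>j<N k. w k j * e j s) * X s) t) \<longlonglongrightarrow> primitive (\<lambda>s. \<eta> s * X s) t"
  proof (rule primitive_tendsto[where C=M])
    show "\<bar>(\<Sum>j<N k. w k j * e j s) * X s\<bar> \<le> M" for k s
      using tail_weights_between[OF w, where a="\<lambda>j. e j s" and lo=0 and hi=1] e_range
      by (intro abs_mult_unit_le X_bound) auto
    show "AE s in lborel. s \<in> {0..t} \<longrightarrow> (\<lambda>k. (\<Sum>j<N k. w k j * e j s) * X s) \<longlonglongrightarrow> \<eta> s * X s"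
      using AE_lim by eventually_elim (auto intro: tendsto_mult_right)
  qed measurable
  ultimately have "primitive (\<lambda>s. \<eta> s * X s) t = A" by (rule LIMSEQ_unique[rotated])
  moreover have "primitive (\<lambda>s. Rl s - \<eta> s * X s) t = primitive Rl t - primitive (\<lambda>s. \<eta> s * X s) t"
    by (intro primitive_diff set_integrable_bounded[OF _ Rl_bound] set_integrable_bounded[where B=M]
        abs_mult_unit_le \<eta>_range X_bound; measurable)
  ultimately show ?thesis by (simp add: A_def)
qed

lemma tail_weights_primitive_norm_square_le:
  fixes x :: "nat \<Rightarrow> real \<Rightarrow> 'a::euclidean_space"
  assumes w: "tail_weights w N"
    and [measurable]: "\<And>j. x j \<in> borel_measurable lborel" "y \<in> borel_measurable lborel"
    and bound: "\<And>j s. norm (x j s) \<le> B"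
    and AE_lim: "AE s in lborel. s \<in> {0..t} \<longrightarrow> (\<lambda>k. \<Sum>j<N k. w k j *\<^sub>R x j s) \<longlonglongrightarrow> y s"
    and lim: "(\<lambda>j. primitive (\<lambda>s. (norm (x j s))\<^sup>2) t) \<longlonglongrightarrow> q"
  shows "primitive (\<lambda>s. (norm (y s))\<^sup>2) t \<le> q"
proof -
  have comb_bound: "norm (\<Sum>j<N k. w k j *\<^sub>R x j s) \<le> B" for k s
    using tail_weights_norm_le[OF w bound] .
  have square_bound: "\<bar>(norm z)\<^sup>2\<bar> \<le> B\<^sup>2" if "norm z \<le> B" for z :: 'a
    using that by (simp add: power_mono)
  have "(\<lambda>k. primitive (\<lambda>s. (norm (\<Sum>j<N k. w k j *\<^sub>R x j s))\<^sup>2) t) \<longlonglongrightarrow> primitive (\<lambda>s. (norm (y s))\<^sup>2) t"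
  proof (rule primitive_tendsto[where C="B\<^sup>2"])
    show "\<bar>(norm (\<Sum>j<N k. w k j *\<^sub>R x j s))\<^sup>2\<bar> \<le> B\<^sup>2" for k s by (rule square_bound[OF comb_bound])
    show "AE s in lborel. s \<in> {0..t} \<longrightarrow>
        (\<lambda>k. (norm (\<Sum>j<N k. w k j *\<^sub>R x j s))\<^sup>2) \<longlonglongrightarrow> (norm (y s))\<^sup>2"
      using AE_lim by eventually_elim (auto intro: tendsto_intros)
  qed measurable
  moreover have "(\<lambda>k. \<Sum>j<N k. w k j * primitive (\<lambda>s. (norm (x j s))\<^sup>2) t) \<longlonglongrightarrow> q"
    by (rule tail_weights_tendsto[OF w lim])
  moreover have "primitive (\<lambda>s. (norm (\<Sum>j<N k. w k j *\<^sub>R x j s))\<^sup>2) t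
      \<le> (\<Sum>j<N k. w k j * primitive (\<lambda>s. (norm (x j s))\<^sup>2) t)" for k
  proof -
    have "primitive (\<lambda>s. (norm (\<Sum>j<N k. w k j *\<^sub>R x j s))\<^sup>2) t
        \<le> primitive (\<lambda>s. \<Sum>j<N k. w k j * (norm (x j s))\<^sup>2) t"
    proof (rule primitive_mono)
      show "set_integrable lborel {0..t} (\<lambda>s. (norm (\<Sum>j<N k. w k j *\<^sub>R x j s))\<^sup>2)"
        by (rule set_integrable_bounded[OF _ square_bound[OF comb_bound]]) measurable
      have "\<bar>\<Sum>j<N k. w k j * (norm (x j s))\<^sup>2\<bar> \<le> B\<^sup>2" for s
        using tail_weights_between[OF w, where a="\<lambda>j. (norm (x j s))\<^sup>2" and lo=0 and hi="B\<^sup>2"]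
          square_bound[OF bound] by fastforce
      then show "set_integrable lborel {0..t} (\<lambda>s. \<Sum>j<N k. w k j * (norm (x j s))\<^sup>2)"
        by (rule set_integrable_bounded[rotated]) measurable
      show "(norm (\<Sum>j<N k. w k j *\<^sub>R x j s))\<^sup>2 \<le> (\<Sum>j<N k. w k j * (norm (x j s))\<^sup>2)" for s
        by (rule tail_weights_norm_square[OF w])
    qed
    also have "\<dots> = (\<Sum>j<N k. w k j * primitive (\<lambda>s. (norm (x j s))\<^sup>2) t)"
      by (rule primitive_sum) (rule set_integrable_bounded[OF _ square_bound[OF bound]], measurable)
    finally show ?thesis .
  qed
  ultimately show ?thesis by (intro LIMSEQ_le) auto
qed

lemma tendsto_clipped_lim:
  fixes X :: "nat \<Rightarrow> real"
  assumes "convergent X" "\<And>k. X k \<in> {0..1}"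
  shows "X \<longlonglongrightarrow> max 0 (min 1 (lim X))"
proof -
  have "X \<longlonglongrightarrow> lim X" using assms(1) by (simp add: convergent_LIMSEQ_iff)
  moreover from this have "lim X \<in> {0..1}"
    using LIMSEQ_le_const[of X "lim X" 0] LIMSEQ_le_const2[of X "lim X" 1] assms(2) by auto
  ultimately show ?thesis by simp
qed

lemma tail_limit_of_controls:
  fixes e1 e2 :: "nat \<Rightarrow> real \<Rightarrow> real"
  assumes [measurable]: "\<And>j. e1 j \<in> borel_measurable lborel" "\<And>j. e2 j \<in> borel_measurable lborel"
    and range: "\<And>j s. e1 j s \<in> {0..1}" "\<And>j s. e2 j s \<in> {0..1}"
  obtains w N \<eta>1 \<eta>2 where "tail_weights w N"
    "\<eta>1 \<in> borel_measurable lborel" "\<eta>2 \<in> borel_measurable lborel" "\<And>s. \<eta>1 s \<in> {0..1}" "\<And>s. \<eta>2 s \<in> {0..1}"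
    "AE s in lborel. s \<in> {0..T} \<longrightarrow> (\<lambda>k. \<Sum>j<N k. w k j *\<^sub>R (e1 j s, e2 j s)) \<longlonglongrightarrow> (\<eta>1 s, \<eta>2 s)"
proof -
  define x where "x j s = indicator {0..T} s *\<^sub>R (e1 j s, e2 j s)" for j s
  interpret tail_combinations "{0..T}" x 2
  proof
    show "x j \<in> borel_measurable lborel" for j unfolding x_def by measurable
    show "norm (x j s) \<le> 2" for j s
      using norm_Pair_le[of "e1 j s" "e2 j s"] range[of j s] by (auto simp: x_def indicator_def)
    show "x j s = 0" if "s \<notin> {0..T}" for j s using that by (simp add: x_def zero_prod_def)
  qed (auto simp: emeasure_lborel_Icc_eq)
  obtain w N where w: "tail_weights w N"
    and conv: "AE s in lborel. convergent (\<lambda>k. \<Sum>j<N k. w k j *\<^sub>R x j s)"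
    by (rule AE_convergent_tail_combinations)
  define \<eta>1 where "\<eta>1 s = max 0 (min 1 (lim (\<lambda>k. \<Sum>j<N k. w k j * e1 j s)))" for s
  define \<eta>2 where "\<eta>2 s = max 0 (min 1 (lim (\<lambda>k. \<Sum>j<N k. w k j * e2 j s)))" for s
  have pair: "(\<Sum>j<N k. w k j *\<^sub>R (e1 j s, e2 j s))
      = (\<Sum>j<N k. w k j * e1 j s, \<Sum>j<N k. w k j * e2 j s)" for k s
    by (simp add: prod_eq_iff fst_sum snd_sum)
  have "AE s in lborel. s \<in> {0..T} \<longrightarrow> (\<lambda>k. \<Sum>j<N k. w k j *\<^sub>R (e1 j s, e2 j s)) \<longlonglongrightarrow> (\<eta>1 s, \<eta>2 s)"
    using conv
  proof eventually_elim
    case (elim s)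
    show ?case
    proof
      assume "s \<in> {0..T}"
      then have "x j s = (e1 j s, e2 j s)" for j by (simp add: x_def)
      with elim have "convergent (\<lambda>k. \<Sum>j<N k. w k j *\<^sub>R (e1 j s, e2 j s))" by (simp only:)
      then obtain L where L: "(\<lambda>k. (\<Sum>j<N k. w k j * e1 j s, \<Sum>j<N k. w k j * e2 j s)) \<longlonglongrightarrow> L"
        unfolding convergent_def pair by blast
      have "convergent (\<lambda>k. \<Sum>j<N k. w k j * e1 j s)" "convergent (\<lambda>k. \<Sum>j<N k. w k j * e2 j s)"
        using tendsto_fst[OF L] tendsto_snd[OF L] unfolding convergent_def by auto
      then have "(\<lambda>k. \<Sum>j<N k. w k j * e1 j s) \<longlonglongrightarrow> \<eta>1 s"
        "(\<lambda>k. \<Sum>j<N k. w k j * e2 j s) \<longlonglongrightarrow> \<eta>2 s"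
        unfolding \<eta>1_def \<eta>2_def using range
        by (auto intro!: tendsto_clipped_lim tail_weights_between[OF w])
      then show "(\<lambda>k. \<Sum>j<N k. w k j *\<^sub>R (e1 j s, e2 j s)) \<longlonglongrightarrow> (\<eta>1 s, \<eta>2 s)"
        unfolding pair by (rule tendsto_Pair)
    qed
  qed
  moreover have "\<eta>1 \<in> borel_measurable lborel" "\<eta>2 \<in> borel_measurable lborel"
    unfolding \<eta>1_def[abs_def] \<eta>2_def[abs_def] by measurable
  ultimately show ?thesis using that w by (auto simp: \<eta>1_def \<eta>2_def)
qed

lemma norm_Pair_square: "(norm (a, b))\<^sup>2 = a\<^sup>2 + (b::real)\<^sup>2"
  by (simp add: norm_Pair)

section \<open>The harvesting model\<close>

lemma clamp_real_in: "a \<le> b \<Longrightarrow> clamp a b (t::real) \<in> {a..b}"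
  using clamp_in_interval[of a b t] by (simp add: cbox_interval)

lemma clamp_real_id: "t \<in> {a..b} \<Longrightarrow> clamp a b (t::real) = t"
  using clamp_cancel_cbox[of t a b] by (simp add: cbox_interval)

lemma clamp_real_eq: "a \<le> b \<Longrightarrow> clamp a b (x::real) = max a (min b x)"
  unfolding clamp_def Basis_real_def by (simp add: inner_real_def)

lemma clamp_real_nonexpansive: "\<bar>clamp a b s - clamp a b (t::real)\<bar> \<le> \<bar>s - t\<bar>"
  using dist_clamps_le_dist_args[of a b s t] by (simp add: dist_real_def)

lemma continuous_on_clamp_real:
  fixes f :: "real \<Rightarrow> 'a::metric_space"
  shows "continuous_on {a..b} f \<Longrightarrow> continuous_on S (\<lambda>t. f (clamp a b (t::real)))"
  using clamp_continuous_on[of a b f S] by (simp add: cbox_interval)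

lemma bounded_clamp_real:
  fixes f :: "real \<Rightarrow> real"
  assumes "continuous_on {a..b} f" "a \<le> b"
  obtains Q where "\<And>t. \<bar>f (clamp a b t)\<bar> \<le> Q"
proof -
  have "bounded (f ` {a..b})"
    by (rule compact_imp_bounded[OF compact_continuous_image[OF assms(1)]]) simp
  then obtain Q where "\<forall>x\<in>{a..b}. \<bar>f x\<bar> \<le> Q" unfolding bounded_iff by auto
  then show ?thesis using that clamp_real_in[OF assms(2)] by blast
qed

lemma rhs_m_swap: "rhs_m \<beta> \<delta> K e x y = rhs_f \<beta> \<delta> K e y x"
  by (simp add: rhs_m_def rhs_f_def Lfac_def algebra_simps)

lemma rhs_f_factor: "rhs_f \<beta> \<delta> K e x y = x * (1/2 * y * \<beta> * Lfac K x y - \<delta> - e)"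
  by (simp add: rhs_f_def algebra_simps)

lemma measurable_rhs [measurable]:
  assumes [measurable]: "e \<in> borel_measurable lborel" "f \<in> borel_measurable lborel"
    "m \<in> borel_measurable lborel"
  shows "(\<lambda>s. rhs_f \<beta> \<delta> K (e s) (f s) (m s)) \<in> borel_measurable lborel"
    "(\<lambda>s. rhs_m \<beta> \<delta> K (e s) (f s) (m s)) \<in> borel_measurable lborel"
  unfolding rhs_f_def rhs_m_def Lfac_def by measurable

lemma Lfac_bound:
  assumes "0 < K" "\<bar>x\<bar> \<le> Q" "\<bar>y\<bar> \<le> Q"
  shows "\<bar>Lfac K x y\<bar> \<le> 1 + 2 * Q / K"
proof -
  have "\<bar>(x + y) / K\<bar> \<le> 2 * Q / K"
    using assms by (simp add: abs_divide divide_right_mono abs_triangle_ineq[THEN order_trans])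
  then show ?thesis unfolding Lfac_def by linarith
qed

lemma growth_factor_bound:
  assumes "0 < K" "0 \<le> \<beta>" "0 \<le> \<delta>" "\<bar>x\<bar> \<le> Q" "\<bar>y\<bar> \<le> Q" "\<bar>e\<bar> \<le> 1"
  shows "\<bar>1/2 * y * \<beta> * Lfac K x y - \<delta> - e\<bar> \<le> \<beta> * Q * (1 + 2 * Q / K) + \<delta> + 1"
proof -
  define Z where "Z = Q * (1 + 2 * Q / K)"
  have Q: "0 \<le> Q" using assms(4) by simp
  then have Z: "0 \<le> Z" using assms(1) by (simp add: Z_def)
  have "\<bar>1/2 * y * \<beta> * Lfac K x y\<bar> = 1/2 * \<beta> * (\<bar>y\<bar> * \<bar>Lfac K x y\<bar>)"
    using assms(2) by (simp add: abs_mult)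
  also have "\<dots> \<le> 1/2 * \<beta> * Z"
    unfolding Z_def using assms(2) Lfac_bound[OF assms(1,4,5)] Q
    by (intro mult_left_mono mult_mono assms(5)) auto
  also have "\<dots> \<le> \<beta> * Z" using mult_nonneg_nonneg[OF assms(2) Z] by linarith
  also have "\<dots> = \<beta> * Q * (1 + 2 * Q / K)" by (simp add: Z_def)
  finally show ?thesis using assms(3,6) by linarith
qed

lemma rhs_f_bound:
  assumes "0 < K" "0 \<le> \<beta>" "0 \<le> \<delta>" "\<bar>x\<bar> \<le> Q" "\<bar>y\<bar> \<le> Q" "\<bar>e\<bar> \<le> 1"
  shows "\<bar>rhs_f \<beta> \<delta> K e x y\<bar> \<le> Q * (\<beta> * Q * (1 + 2 * Q / K) + \<delta> + 1)"
  unfolding rhs_f_factor abs_mult using growth_factor_bound[OF assms]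
  by (intro mult_mono) (use assms in auto)

lemma product_lipschitz:
  fixes a b a' b' :: real
  assumes "\<bar>a\<bar> \<le> A" "\<bar>b'\<bar> \<le> B"
  shows "\<bar>a * b - a' * b'\<bar> \<le> A * \<bar>b - b'\<bar> + B * \<bar>a - a'\<bar>"
proof -
  have "\<bar>a * b - a' * b'\<bar> = \<bar>a * (b - b') + b' * (a - a')\<bar>" by (simp add: algebra_simps)
  also have "\<dots> \<le> \<bar>a\<bar> * \<bar>b - b'\<bar> + \<bar>b'\<bar> * \<bar>a - a'\<bar>" by (simp add: abs_mult[symmetric] abs_triangle_ineq)
  also have "\<dots> \<le> A * \<bar>b - b'\<bar> + B * \<bar>a - a'\<bar>" using assms by (intro add_mono mult_right_mono) auto
  finally show ?thesis .
qed

text \<open>Without harvesting, \<open>rhs_f = \<beta>/2 \<cdot> p - \<beta>/(2K) \<cdot> p s - \<delta> x\<close> with \<open>p = x y\<close> and \<open>s = x + y\<close>.\<close>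
lemma rhs_f_lipschitz:
  assumes K: "0 < K" and "0 \<le> \<beta>" "0 \<le> \<delta>"
    and box: "\<bar>x\<bar> \<le> M" "\<bar>y\<bar> \<le> M" "\<bar>x'\<bar> \<le> M" "\<bar>y'\<bar> \<le> M"
  shows "\<bar>rhs_f \<beta> \<delta> K 0 x y - rhs_f \<beta> \<delta> K 0 x' y'\<bar>
    \<le> (\<beta> * M + 2 * \<beta> * M\<^sup>2 / K + \<delta>) * (\<bar>x - x'\<bar> + \<bar>y - y'\<bar>)"
proof -
  define d where "d = \<bar>x - x'\<bar> + \<bar>y - y'\<bar>"
  have M: "0 \<le> M" using box(1) by simp
  have p: "\<bar>x * y - x' * y'\<bar> \<le> M * d"
    using product_lipschitz[where a=x and b=y and a'=x' and b'=y', OF box(1,4)]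
    by (simp add: d_def algebra_simps)
  have "\<bar>x * y\<bar> \<le> M\<^sup>2" using box M by (simp add: abs_mult power2_eq_square mult_mono)
  moreover have "\<bar>x' + y'\<bar> \<le> 2 * M" using box by linarith
  ultimately have "\<bar>x * y * (x + y) - x' * y' * (x' + y')\<bar>
      \<le> M\<^sup>2 * \<bar>(x + y) - (x' + y')\<bar> + 2 * M * \<bar>x * y - x' * y'\<bar>"
    by (rule product_lipschitz)
  also have "\<dots> \<le> M\<^sup>2 * d + 2 * M * (M * d)"
    using p M by (intro add_mono mult_left_mono) (auto simp: d_def)
  finally have ps: "\<bar>x * y * (x + y) - x' * y' * (x' + y')\<bar> \<le> 3 * M\<^sup>2 * d"
    by (simp add: power2_eq_square algebra_simps)
  have "rhs_f \<beta> \<delta> K 0 x y - rhs_f \<beta> \<delta> K 0 x' y'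
      = \<beta> / 2 * (x * y - x' * y') - \<beta> / (2 * K) * (x * y * (x + y) - x' * y' * (x' + y')) - \<delta> * (x - x')"
    using K by (simp add: rhs_f_def Lfac_def field_simps)
  also have "\<bar>\<dots>\<bar> \<le> \<beta> / 2 * (M * d) + \<beta> / (2 * K) * (3 * M\<^sup>2 * d) + \<delta> * d"
  proof -
    have "\<bar>\<beta> / 2 * (x * y - x' * y')\<bar> \<le> \<beta> / 2 * (M * d)"
      using p assms(2) by (simp add: abs_mult mult_left_mono)
    moreover have "\<bar>\<beta> / (2 * K) * (x * y * (x + y) - x' * y' * (x' + y'))\<bar>
        = \<beta> / (2 * K) * \<bar>x * y * (x + y) - x' * y' * (x' + y')\<bar>"
      using assms(2) K by (simp add: abs_mult)
    moreover have "\<dots> \<le> \<beta> / (2 * K) * (3 * M\<^sup>2 * d)"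
      using ps assms(2) K by (intro mult_left_mono) auto
    moreover have "\<bar>\<delta> * (x - x')\<bar> \<le> \<delta> * d"
      using assms(3) by (simp add: abs_mult mult_left_mono d_def)
    ultimately show ?thesis by arith
  qed
  also have "\<dots> \<le> (\<beta> * M + 2 * \<beta> * M\<^sup>2 / K + \<delta>) * d"
  proof -
    define u v where "u = \<beta> * M * d" and "v = \<beta> * M\<^sup>2 * d / K"
    have "0 \<le> u" "0 \<le> v" using assms(2) M K by (simp_all add: u_def v_def d_def)
    moreover have "\<beta> / 2 * (M * d) = u / 2" "\<beta> / (2 * K) * (3 * M\<^sup>2 * d) = 3 / 2 * v"
      "(\<beta> * M + 2 * \<beta> * M\<^sup>2 / K + \<delta>) * d = u + 2 * v + \<delta> * d"
      by (simp_all add: u_def v_def field_simps)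
    ultimately show ?thesis by linarith
  qed
  finally show ?thesis by (simp add: d_def)
qed

lemma rhs_sum_nonpos:
  assumes "0 < K" "0 \<le> \<beta>" "0 \<le> \<delta>" "0 \<le> x" "0 \<le> y" "K \<le> x + y" "0 \<le> e1" "0 \<le> e2"
  shows "rhs_f \<beta> \<delta> K e1 x y + rhs_m \<beta> \<delta> K e2 x y \<le> 0"
proof -
  have "1 \<le> (x + y) / K" using assms by (simp add: field_simps)
  then have "x * y * \<beta> * Lfac K x y \<le> 0"
    unfolding Lfac_def using assms by (intro mult_nonneg_nonpos) auto
  moreover have "rhs_f \<beta> \<delta> K e1 x y + rhs_m \<beta> \<delta> K e2 x y
      = x * y * \<beta> * Lfac K x y - \<delta> * (x + y) - e1 * x - e2 * y"
    by (simp add: rhs_f_def rhs_m_def algebra_simps)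
  moreover have "0 \<le> \<delta> * (x + y)" "0 \<le> e1 * x" "0 \<le> e2 * y" using assms by simp_all
  ultimately show ?thesis by linarith
qed

locale harvest_model =
  fixes \<beta> \<delta> K T f0 m0 :: real
  assumes \<beta>: "0 \<le> \<beta>" and \<delta>: "0 \<le> \<delta>" and K: "0 < K" and T: "0 \<le> T"
    and f0: "0 \<le> f0" and m0: "0 \<le> m0"
begin

definition pop_bound :: real where
  "pop_bound = max (f0 + m0) K"

definition rate_bound :: real where
  "rate_bound = pop_bound * (\<beta> * pop_bound * (1 + 2 * pop_bound / K) + \<delta> + 1)"

text \<open>Controls and states are extended to the whole real line, the states being frozen outside
  \<open>[0, T]\<close>; this makes all integrands globally bounded and measurable.\<close>
definition process :: "(real \<Rightarrow> real) \<Rightarrow> (real \<Rightarrow> real) \<Rightarrow> (real \<Rightarrow> real) \<Rightarrow> (real \<Rightarrow> real) \<Rightarrow> bool" where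
  "process e1 e2 f m \<longleftrightarrow>
     e1 \<in> borel_measurable lborel \<and> e2 \<in> borel_measurable lborel \<and>
     (\<forall>t. e1 t \<in> {0..1} \<and> e2 t \<in> {0..1}) \<and>
     continuous_on UNIV f \<and> continuous_on UNIV m \<and>
     (\<forall>t. f (clamp 0 T t) = f t \<and> m (clamp 0 T t) = m t) \<and>
     (\<forall>t\<in>{0..T}. f t = f0 + primitive (\<lambda>s. rhs_f \<beta> \<delta> K (e1 s) (f s) (m s)) t \<and>
                 m t = m0 + primitive (\<lambda>s. rhs_m \<beta> \<delta> K (e2 s) (f s) (m s)) t)"

lemma pop_bound: "0 \<le> pop_bound" "K \<le> pop_bound" "f0 + m0 \<le> pop_bound"
  using K f0 m0 by (auto simp: pop_bound_def)

lemma rhs_bound: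
  assumes "\<bar>x\<bar> \<le> pop_bound" "\<bar>y\<bar> \<le> pop_bound" "\<bar>e\<bar> \<le> 1"
  shows "\<bar>rhs_f \<beta> \<delta> K e x y\<bar> \<le> rate_bound" "\<bar>rhs_m \<beta> \<delta> K e x y\<bar> \<le> rate_bound"
  using rhs_f_bound[OF K \<beta> \<delta> assms(1,2,3)] rhs_f_bound[OF K \<beta> \<delta> assms(2,1,3)]
  by (simp_all add: rate_bound_def rhs_m_swap)

lemma state_component_nonneg:
  assumes "e \<in> borel_measurable lborel" "\<And>s. e s \<in> {0..1}"
    and "continuous_on UNIV x" "continuous_on UNIV y" "\<And>s. \<bar>x s\<bar> \<le> Q" "\<And>s. \<bar>y s\<bar> \<le> Q"
    and eq: "\<And>t. t \<in> {0..T} \<Longrightarrow> x t = x0 + primitive (\<lambda>s. rhs_f \<beta> \<delta> K (e s) (x s) (y s)) t"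
    and "0 \<le> x0" "t \<in> {0..T}"
  shows "0 \<le> x t"
proof -
  let ?g = "\<lambda>s. 1/2 * y s * \<beta> * Lfac K (x s) (y s) - \<delta> - e s"
  have "?g \<in> borel_measurable lborel"
    using assms(1) borel_measurable_continuous_onI[OF assms(3)]
      borel_measurable_continuous_onI[OF assms(4)]
    unfolding Lfac_def by measurable
  moreover have "\<bar>?g s\<bar> \<le> \<beta> * Q * (1 + 2 * Q / K) + \<delta> + 1" for s
    using assms(2)[of s] by (intro growth_factor_bound[OF K \<beta> \<delta> assms(5,6)]) auto
  moreover have "x t = x 0 + primitive (\<lambda>s. x s * ?g s) t" if "t \<in> {0..T}" for t
    using eq[OF that] eq[of 0] T by (simp add: rhs_f_factor)
  moreover have "0 \<le> x 0" using eq[of 0] T assms(8) by simp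
  ultimately show ?thesis
    using linear_integral_equation_nonneg[of ?g _ x Q T] assms(3,5,9) by blast
qed

lemma processD:
  assumes "process e1 e2 f m"
  shows "e1 \<in> borel_measurable lborel" "e2 \<in> borel_measurable lborel"
    "\<And>t. e1 t \<in> {0..1}" "\<And>t. e2 t \<in> {0..1}"
    "continuous_on UNIV f" "continuous_on UNIV m"
    "\<And>t. f (clamp 0 T t) = f t" "\<And>t. m (clamp 0 T t) = m t"
    "\<And>t. t \<in> {0..T} \<Longrightarrow> f t = f0 + primitive (\<lambda>s. rhs_f \<beta> \<delta> K (e1 s) (f s) (m s)) t"
    "\<And>t. t \<in> {0..T} \<Longrightarrow> m t = m0 + primitive (\<lambda>s. rhs_m \<beta> \<delta> K (e2 s) (f s) (m s)) t"
  using assms unfolding process_def by blast+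

lemma process_initial: "process e1 e2 f m \<Longrightarrow> f 0 = f0 \<and> m 0 = m0"
  using processD(9,10)[of e1 e2 f m 0] T by simp

lemma process_box:
  assumes "process e1 e2 f m"
  shows "0 \<le> f t \<and> 0 \<le> m t \<and> f t + m t \<le> pop_bound"
proof -
  note P = processD[OF assms]
  have [measurable]: "f \<in> borel_measurable lborel" "m \<in> borel_measurable lborel"
    using P(5,6) by (auto intro: borel_measurable_continuous_onI)
  note [measurable] = P(1,2)
  have "continuous_on {0..T} f" "continuous_on {0..T} m"
    using P(5,6) by (auto intro: continuous_on_subset)
  then obtain Qf Qm where "\<And>t. \<bar>f (clamp 0 T t)\<bar> \<le> Qf" "\<And>t. \<bar>m (clamp 0 T t)\<bar> \<le> Qm"
    using bounded_clamp_real T by metis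
  then have Q: "\<bar>f t\<bar> \<le> max Qf Qm" "\<bar>m t\<bar> \<le> max Qf Qm" for t
    unfolding P(7,8) by (auto intro: max.coboundedI1 max.coboundedI2)
  have nonneg: "0 \<le> f t \<and> 0 \<le> m t" if "t \<in> {0..T}" for t
  proof
    show "0 \<le> f t"
      by (rule state_component_nonneg[OF P(1,3,5,6) Q P(9) f0 that])
    show "0 \<le> m t"
      by (rule state_component_nonneg[OF P(2,4,6,5) Q(2,1) _ m0 that]) (simp add: P(10) rhs_m_swap)
  qed
  define B where "B = max Qf Qm * (\<beta> * max Qf Qm * (1 + 2 * max Qf Qm / K) + \<delta> + 1)"
  have hf: "\<bar>rhs_f \<beta> \<delta> K (e1 s) (f s) (m s)\<bar> \<le> B" for s
    unfolding B_def using P(3)[of s] by (intro rhs_f_bound[OF K \<beta> \<delta> Q]) auto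
  have hm: "\<bar>rhs_m \<beta> \<delta> K (e2 s) (f s) (m s)\<bar> \<le> B" for s
    unfolding B_def rhs_m_swap using P(4)[of s] by (intro rhs_f_bound[OF K \<beta> \<delta> Q(2,1)]) auto
  have total: "f t + m t \<le> pop_bound" if t: "t \<in> {0..T}" for t
  proof (rule integral_equation_upper_barrier[where \<phi>="\<lambda>t. f t + m t" and T=T])
    let ?h = "\<lambda>s. rhs_f \<beta> \<delta> K (e1 s) (f s) (m s) + rhs_m \<beta> \<delta> K (e2 s) (f s) (m s)"
    show "\<bar>?h s\<bar> \<le> 2 * B" for s using hf[of s] hm[of s] by linarith
    show "?h \<in> borel_measurable lborel" by measurable
    show "continuous_on {0..T} (\<lambda>t. f t + m t)"
      using P(5,6) by (auto intro!: continuous_intros intro: continuous_on_subset)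
    show "f t + m t = f 0 + m 0 + primitive ?h t" if "t \<in> {0..T}" for t
      unfolding P(9)[OF that] P(10)[OF that] using process_initial[OF assms]
      by (simp add: primitive_add set_integrable_bounded_Icc[OF _ hf]
          set_integrable_bounded_Icc[OF _ hm])
    show "f 0 + m 0 \<le> pop_bound" using process_initial[OF assms] pop_bound(3) by simp
    show "?h s \<le> 0" if "s \<in> {0..T}" "pop_bound < f s + m s" for s
      using nonneg[OF that(1)] P(3,4) pop_bound(2) that(2) by (intro rhs_sum_nonpos[OF K \<beta> \<delta>]) auto
  qed (rule t)
  then show ?thesis
    using nonneg[OF clamp_real_in[OF T]] total[OF clamp_real_in[OF T]] unfolding P(7,8) by blast
qed

lemma process_state_bound:
  assumes "process e1 e2 f m"
  shows "\<bar>f t\<bar> \<le> pop_bound" "\<bar>m t\<bar> \<le> pop_bound"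
  using process_box[OF assms, of t] by auto

lemma process_rhs_bound:
  assumes "process e1 e2 f m"
  shows "\<bar>rhs_f \<beta> \<delta> K (e1 s) (f s) (m s)\<bar> \<le> rate_bound"
    "\<bar>rhs_m \<beta> \<delta> K (e2 s) (f s) (m s)\<bar> \<le> rate_bound"
  using processD(3,4)[OF assms, of s] process_state_bound[OF assms]
  by (auto intro!: rhs_bound)

lemma process_measurable:
  assumes "process e1 e2 f m"
  shows "f \<in> borel_measurable lborel" "m \<in> borel_measurable lborel"
  using processD(5,6)[OF assms] by (auto intro: borel_measurable_continuous_onI)

lemma process_state_lipschitz:
  assumes "process e1 e2 f m"
  shows "\<bar>f a - f b\<bar> \<le> rate_bound * \<bar>a - b\<bar> \<and> \<bar>m a - m b\<bar> \<le> rate_bound * \<bar>a - b\<bar>"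
proof -
  note P = processD[OF assms] and [measurable] = process_measurable[OF assms] processD(1,2)[OF assms]
  have R: "0 \<le> rate_bound" using process_rhs_bound(1)[OF assms, of 0] by linarith
  have "\<bar>x a - x b\<bar> \<le> rate_bound * \<bar>a - b\<bar>"
    if eq: "\<And>t. t \<in> {0..T} \<Longrightarrow> x t = x0 + primitive h t" and frz: "\<And>t. x (clamp 0 T t) = x t"
      and [measurable]: "h \<in> borel_measurable lborel" and hb: "\<And>s. \<bar>h s\<bar> \<le> rate_bound"
    for x h x0
  proof -
    have "\<bar>x a - x b\<bar> = \<bar>primitive h (clamp 0 T a) - primitive h (clamp 0 T b)\<bar>"
      using eq[OF clamp_real_in[OF T, of a]] eq[OF clamp_real_in[OF T, of b]] frz[of a] frz[of b] by simp
    also have "\<dots> \<le> rate_bound * \<bar>clamp 0 T a - clamp 0 T b\<bar>"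
      by (rule primitive_lipschitz[OF _ hb]) measurable
    also have "\<dots> \<le> rate_bound * \<bar>a - b\<bar>"
      using R clamp_real_nonexpansive by (rule mult_left_mono[rotated])
    finally show ?thesis .
  qed
  from this[OF P(9) P(7)] this[OF P(10) P(8)] show ?thesis
    using process_rhs_bound[OF assms] by auto
qed

lemma process_J4:
  assumes "process e1 e2 f m"
  shows "J4 T e1 e2 f m = - primitive (\<lambda>t. f t + m t) T - 1/2 * primitive (\<lambda>t. (e1 t)\<^sup>2 + (e2 t)\<^sup>2) T"
proof -
  note [measurable] = process_measurable[OF assms] processD(1,2)[OF assms]
  have "\<bar>f t + m t\<bar> \<le> pop_bound" for t using process_box[OF assms, of t] by auto
  then have "\<bar>- (f t + m t)\<bar> \<le> pop_bound" for t by (simp only: abs_minus_cancel)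
  then have "set_integrable lborel {0..T} (\<lambda>t. - (f t + m t))"
    by (intro set_integrable_bounded_Icc[where B=pop_bound]) auto
  moreover have sq: "(e1 t)\<^sup>2 \<le> 1" "(e2 t)\<^sup>2 \<le> 1" for t
    using processD(3,4)[OF assms, of t] by (auto intro: power_le_one)
  have "\<bar>(e1 t)\<^sup>2 + (e2 t)\<^sup>2\<bar> \<le> 2" for t
    using add_mono[OF sq(1,2)[of t]] by simp
  then have "set_integrable lborel {0..T} (\<lambda>t. 1/2 * ((e1 t)\<^sup>2 + (e2 t)\<^sup>2))"
    by (intro set_integrable_bounded_Icc[where B=1]) (auto simp: abs_mult)
  ultimately show ?thesis
    unfolding J4_def primitive_def[symmetric]
    by (simp only: primitive_diff primitive_uminus primitive_cmult)
qed

lemma J4_nonpos: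
  assumes "process e1 e2 f m"
  shows "J4 T e1 e2 f m \<le> 0"
proof -
  have "- (f t + m t) - 1/2 * ((e1 t)\<^sup>2 + (e2 t)\<^sup>2) \<le> 0" for t
  proof -
    have "- (f t + m t) \<le> 0" using process_box[OF assms, of t] by simp
    moreover have "0 \<le> 1/2 * ((e1 t)\<^sup>2 + (e2 t)\<^sup>2)" by simp
    ultimately show ?thesis by linarith
  qed
  then show ?thesis unfolding J4_def by (intro set_integral_nonpos_Icc)
qed

definition control_ext :: "(real \<Rightarrow> real) \<Rightarrow> real \<Rightarrow> real" where
  "control_ext e t = indicator {0..T} t * e t"

definition state_ext :: "(real \<Rightarrow> real) \<Rightarrow> real \<Rightarrow> real" where
  "state_ext f t = f (clamp 0 T t)"

lemma admissible_imp_process: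
  assumes U: "(e1, e2) \<in> U4 T" and S: "is_state \<beta> \<delta> K T f0 m0 e1 e2 f m"
  shows "process (control_ext e1) (control_ext e2) (state_ext f) (state_ext m)"
    and "J4 T (control_ext e1) (control_ext e2) (state_ext f) (state_ext m) = J4 T e1 e2 f m"
proof -
  have ext: "control_ext e1 s = e1 s" "control_ext e2 s = e2 s"
    "state_ext f s = f s" "state_ext m s = m s"
    if "s \<in> {0..T}" for s
    using that by (simp_all add: control_ext_def state_ext_def clamp_real_id)
  have "control_ext e1 \<in> borel_measurable lborel" "control_ext e2 \<in> borel_measurable lborel"
    using U unfolding U4_def set_borel_measurable_def control_ext_def[abs_def] by auto
  moreover have "control_ext e1 t \<in> {0..1} \<and> control_ext e2 t \<in> {0..1}" for t
    using U unfolding U4_def control_ext_def by (auto simp: indicator_def)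
  moreover have "continuous_on UNIV (state_ext f)" "continuous_on UNIV (state_ext m)"
    using S unfolding is_state_def state_ext_def[abs_def] by (auto intro: continuous_on_clamp_real)
  moreover have "state_ext f (clamp 0 T t) = state_ext f t"
    "state_ext m (clamp 0 T t) = state_ext m t" for t
    using ext(3,4)[OF clamp_real_in[OF T]] by (simp_all add: state_ext_def)
  moreover have
    "state_ext f t = f0 + primitive (\<lambda>s. rhs_f \<beta> \<delta> K (control_ext e1 s) (state_ext f s) (state_ext m s)) t"
    "state_ext m t = m0 + primitive (\<lambda>s. rhs_m \<beta> \<delta> K (control_ext e2 s) (state_ext f s) (state_ext m s)) t"
    if t: "t \<in> {0..T}" for t
  proof -
    have sub: "s \<in> {0..T}" if "s \<in> {0..t}" for s using that t by auto
    show
      "state_ext f t = f0 + primitive (\<lambda>s. rhs_f \<beta> \<delta> K (control_ext e1 s) (state_ext f s) (state_ext m s)) t"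
      using S t ext[OF sub] unfolding is_state_def ext(3)[OF t]
      by (auto simp: primitive_def intro!: set_lebesgue_integral_cong)
    show
      "state_ext m t = m0 + primitive (\<lambda>s. rhs_m \<beta> \<delta> K (control_ext e2 s) (state_ext f s) (state_ext m s)) t"
      using S t ext[OF sub] unfolding is_state_def ext(4)[OF t]
      by (auto simp: primitive_def intro!: set_lebesgue_integral_cong)
  qed
  ultimately show "process (control_ext e1) (control_ext e2) (state_ext f) (state_ext m)"
    unfolding process_def by blast
  show "J4 T (control_ext e1) (control_ext e2) (state_ext f) (state_ext m) = J4 T e1 e2 f m"
    unfolding J4_def by (rule set_lebesgue_integral_cong) (auto simp: ext)
qed

lemma process_imp_admissible:
  assumes "process e1 e2 f m"
  shows "(e1, e2) \<in> U4 T" "is_state \<beta> \<delta> K T f0 m0 e1 e2 f m"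
proof -
  note P = processD[OF assms]
    and [measurable] = process_measurable[OF assms] processD(1,2)[OF assms]
  show "(e1, e2) \<in> U4 T"
    using P(3,4) unfolding U4_def set_borel_measurable_def by auto
  have "set_integrable lborel {0..t} (\<lambda>s. rhs_f \<beta> \<delta> K (e1 s) (f s) (m s))"
    "set_integrable lborel {0..t} (\<lambda>s. rhs_m \<beta> \<delta> K (e2 s) (f s) (m s))" for t
    using process_rhs_bound[OF assms] by (auto intro!: set_integrable_bounded_Icc)
  then show "is_state \<beta> \<delta> K T f0 m0 e1 e2 f m"
    unfolding is_state_def primitive_def[symmetric]
    using P(5,6,9,10) by (auto intro: continuous_on_subset)
qed

section \<open>A process with zero control\<close>

abbreviation clip :: "real \<Rightarrow> real" where
  "clip \<equiv> clamp 0 pop_bound"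

lemma clip_bound: "\<bar>clip x\<bar> \<le> pop_bound"
  using pop_bound(1) by (simp add: clamp_real_eq)

text \<open>The Picard iteration is run for the vector field clipped to the box \<open>[0, pop_bound]\<^sup>2\<close>, which is
  bounded and globally Lipschitz.\<close>
lemma clipped_field_picard:
  "picard_planar (\<lambda>x y. rhs_f \<beta> \<delta> K 0 (clip x) (clip y)) (\<lambda>x y. rhs_m \<beta> \<delta> K 0 (clip x) (clip y))
    rate_bound (\<beta> * pop_bound + 2 * \<beta> * pop_bound\<^sup>2 / K + \<delta>)"
proof
  let ?L = "\<beta> * pop_bound + 2 * \<beta> * pop_bound\<^sup>2 / K + \<delta>"
  have L: "0 \<le> ?L" using \<beta> \<delta> K pop_bound(1) by simp
  have lip: "\<bar>rhs_f \<beta> \<delta> K 0 (clip x) (clip y) - rhs_f \<beta> \<delta> K 0 (clip x') (clip y')\<bar>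
      \<le> ?L * (\<bar>x - x'\<bar> + \<bar>y - y'\<bar>)" for x y x' y'
  proof -
    have "\<bar>rhs_f \<beta> \<delta> K 0 (clip x) (clip y) - rhs_f \<beta> \<delta> K 0 (clip x') (clip y')\<bar>
        \<le> ?L * (\<bar>clip x - clip x'\<bar> + \<bar>clip y - clip y'\<bar>)"
      by (rule rhs_f_lipschitz[OF K \<beta> \<delta> clip_bound clip_bound clip_bound clip_bound])
    also have "\<dots> \<le> ?L * (\<bar>x - x'\<bar> + \<bar>y - y'\<bar>)"
      using L by (intro mult_left_mono add_mono clamp_real_nonexpansive)
    finally show ?thesis .
  qed
  show "\<bar>rhs_f \<beta> \<delta> K 0 (clip x) (clip y) - rhs_f \<beta> \<delta> K 0 (clip x') (clip y')\<bar>
      \<le> ?L * (\<bar>x - x'\<bar> + \<bar>y - y'\<bar>)" for x y x' y'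
    by (rule lip)
  show "\<bar>rhs_m \<beta> \<delta> K 0 (clip x) (clip y) - rhs_m \<beta> \<delta> K 0 (clip x') (clip y')\<bar>
      \<le> ?L * (\<bar>x - x'\<bar> + \<bar>y - y'\<bar>)" for x y x' y'
    using lip[of y x y' x'] by (simp add: rhs_m_swap add.commute)
qed (auto intro!: rhs_bound clip_bound)

lemma measurable_clipped_rhs:
  assumes "continuous_on UNIV x" "continuous_on UNIV y"
  shows "(\<lambda>s. rhs_f \<beta> \<delta> K 0 (clip (x s)) (clip (y s))) \<in> borel_measurable lborel"
proof -
  have "continuous_on UNIV (\<lambda>s. rhs_f \<beta> \<delta> K 0 (clip (x s)) (clip (y s)))"
    using assms unfolding clamp_real_eq[OF pop_bound(1)] rhs_f_def Lfac_def divide_inverse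
    by (intro continuous_intros)
  then show ?thesis using borel_measurable_continuous_onI by simp
qed

lemma clipped_component_nonneg:
  assumes "continuous_on UNIV x" "continuous_on UNIV y" "0 \<le> x0"
    and eq: "\<And>t. x t = x0 + primitive (\<lambda>s. rhs_f \<beta> \<delta> K 0 (clip (x s)) (clip (y s))) t"
    and "t \<in> {0..T}"
  shows "0 \<le> x t"
proof -
  have "- x t \<le> 0"
  proof (rule integral_equation_upper_barrier[where \<phi>="\<lambda>t. - x t" and T=T])
    show "(\<lambda>s. - rhs_f \<beta> \<delta> K 0 (clip (x s)) (clip (y s))) \<in> borel_measurable lborel"
      using measurable_clipped_rhs[OF assms(1,2)] by measurable
    show "\<bar>- rhs_f \<beta> \<delta> K 0 (clip (x s)) (clip (y s))\<bar> \<le> rate_bound" for s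
      using rhs_bound(1)[OF clip_bound clip_bound, of 0] by simp
    show "continuous_on {0..T} (\<lambda>t. - x t)"
      using assms(1) by (intro continuous_intros) (auto intro: continuous_on_subset)
    show "- x t = - x 0 + primitive (\<lambda>s. - rhs_f \<beta> \<delta> K 0 (clip (x s)) (clip (y s))) t" for t
      using eq[of t] eq[of 0] by (simp add: primitive_uminus)
    show "- x 0 \<le> 0" using eq[of 0] assms(3) by simp
    show "- rhs_f \<beta> \<delta> K 0 (clip (x s)) (clip (y s)) \<le> 0" if "0 < - x s" for s
      using that pop_bound(1) by (simp add: clamp_real_eq rhs_f_def)
  qed (rule assms(5))
  then show ?thesis by simp
qed

lemma clipped_solution_total:
  assumes "continuous_on UNIV u" "continuous_on UNIV v"
    and u: "\<And>t. u t = f0 + primitive (\<lambda>s. rhs_f \<beta> \<delta> K 0 (clip (u s)) (clip (v s))) t"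
    and v: "\<And>t. v t = m0 + primitive (\<lambda>s. rhs_m \<beta> \<delta> K 0 (clip (u s)) (clip (v s))) t"
    and nonneg: "\<And>s. s \<in> {0..T} \<Longrightarrow> 0 \<le> u s \<and> 0 \<le> v s" and "t \<in> {0..T}"
  shows "u t + v t \<le> pop_bound"
proof (rule integral_equation_upper_barrier[where \<phi>="\<lambda>t. u t + v t" and T=T])
  let ?h = "\<lambda>s. rhs_f \<beta> \<delta> K 0 (clip (u s)) (clip (v s)) + rhs_m \<beta> \<delta> K 0 (clip (u s)) (clip (v s))"
  have [measurable]: "(\<lambda>s. rhs_f \<beta> \<delta> K 0 (clip (u s)) (clip (v s))) \<in> borel_measurable lborel"
    "(\<lambda>s. rhs_m \<beta> \<delta> K 0 (clip (u s)) (clip (v s))) \<in> borel_measurable lborel"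
    using measurable_clipped_rhs[OF assms(1,2)] measurable_clipped_rhs[OF assms(2,1)]
    by (simp_all add: rhs_m_swap)
  have bound: "\<bar>rhs_f \<beta> \<delta> K 0 (clip a) (clip b)\<bar> \<le> rate_bound"
    "\<bar>rhs_m \<beta> \<delta> K 0 (clip a) (clip b)\<bar> \<le> rate_bound"
    for a b using rhs_bound[OF clip_bound clip_bound, of 0] by simp_all
  show "\<bar>?h s\<bar> \<le> 2 * rate_bound" for s
    using bound[of "u s" "v s"] by arith
  show "?h \<in> borel_measurable lborel" by measurable
  show "continuous_on {0..T} (\<lambda>t. u t + v t)"
    using assms(1,2) by (intro continuous_intros) (auto intro: continuous_on_subset)
  show "u t + v t = u 0 + v 0 + primitive ?h t" for t
    using u[of t] v[of t] u[of 0] v[of 0]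
      primitive_add[OF set_integrable_bounded_Icc[OF _ bound(1)]
        set_integrable_bounded_Icc[OF _ bound(2)]]
    by simp
  show "u 0 + v 0 \<le> pop_bound" using u[of 0] v[of 0] pop_bound(3) by simp
  show "?h s \<le> 0" if "s \<in> {0..T}" "pop_bound < u s + v s" for s
  proof (rule rhs_sum_nonpos[OF K \<beta> \<delta>])
    show "K \<le> clip (u s) + clip (v s)"
      using nonneg[OF that(1)] that(2) pop_bound(1,2) by (auto simp: clamp_real_eq)
  qed (use pop_bound(1) in \<open>simp_all add: clamp_real_eq\<close>)
qed (rule assms(6))

lemma exists_process_zero_control: "\<exists>f m. process (\<lambda>_. 0) (\<lambda>_. 0) f m"
proof -
  interpret picard_planar "\<lambda>x y. rhs_f \<beta> \<delta> K 0 (clip x) (clip y)" "\<lambda>x y. rhs_m \<beta> \<delta> K 0 (clip x) (clip y)"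
    rate_bound "\<beta> * pop_bound + 2 * \<beta> * pop_bound\<^sup>2 / K + \<delta>" f0 m0
    by (rule clipped_field_picard)
  obtain u v where uv: "continuous_on UNIV u" "continuous_on UNIV v"
    and u: "\<And>t. u t = f0 + primitive (\<lambda>s. rhs_f \<beta> \<delta> K 0 (clip (u s)) (clip (v s))) t"
    and v: "\<And>t. v t = m0 + primitive (\<lambda>s. rhs_m \<beta> \<delta> K 0 (clip (u s)) (clip (v s))) t"
    by (rule integral_equation_solution, rule that)
  have v': "v t = m0 + primitive (\<lambda>s. rhs_f \<beta> \<delta> K 0 (clip (v s)) (clip (u s))) t" for t
    unfolding rhs_m_swap[symmetric] by (rule v)
  have nonneg: "0 \<le> u s \<and> 0 \<le> v s" if "s \<in> {0..T}" for s
    using clipped_component_nonneg[OF uv f0 u that] clipped_component_nonneg[OF uv(2,1) m0 v' that]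
    by simp
  have in_box: "clip (u s) = u s" "clip (v s) = v s" if "s \<in> {0..T}" for s
    using nonneg[OF that] clipped_solution_total[OF uv u v nonneg that] by (auto simp: clamp_real_eq)
  define f where "f t = u (clamp 0 T t)" for t
  define m where "m t = v (clamp 0 T t)" for t
  have fm: "f s = u s" "m s = v s" if "s \<in> {0..T}" for s
    using that by (simp_all add: f_def m_def clamp_real_id)
  have "process (\<lambda>_. 0) (\<lambda>_. 0) f m"
    unfolding process_def
  proof (intro conjI allI ballI)
    show "continuous_on UNIV f" "continuous_on UNIV m"
      using uv unfolding f_def[abs_def] m_def[abs_def]
      by (auto intro: continuous_on_clamp_real continuous_on_subset)
    show "f (clamp 0 T t) = f t" "m (clamp 0 T t) = m t" for t
      using fm[OF clamp_real_in[OF T]] by (simp_all add: f_def m_def)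
    fix t assume t: "t \<in> {0..T}"
    then have sub: "s \<in> {0..T}" if "s \<in> {0..t}" for s using that by auto
    show "f t = f0 + primitive (\<lambda>s. rhs_f \<beta> \<delta> K 0 (f s) (m s)) t"
      using u[of t] fm[OF t] in_box[OF sub] fm[OF sub] by (auto intro: primitive_cong)
    show "m t = m0 + primitive (\<lambda>s. rhs_m \<beta> \<delta> K 0 (f s) (m s)) t"
      using v[of t] fm[OF t] in_box[OF sub] fm[OF sub] by (auto intro: primitive_cong)
  qed auto
  then show ?thesis by blast
qed

section \<open>Existence of an optimal control\<close>

lemma process_states_subsequence:
  fixes e1 e2 f m :: "nat \<Rightarrow> real \<Rightarrow> real"
  assumes P: "\<And>n. process (e1 n) (e2 n) (f n) (m n)"
  obtains r fs ms where "strict_mono r" "continuous_on UNIV fs" "continuous_on UNIV ms"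
    "\<And>t. fs (clamp 0 T t) = fs t" "\<And>t. ms (clamp 0 T t) = ms t"
    "\<And>t. (\<lambda>j. f (r j) t) \<longlonglongrightarrow> fs t" "\<And>t. (\<lambda>j. m (r j) t) \<longlonglongrightarrow> ms t"
proof -
  obtain r g where r: "strict_mono r" and g: "continuous_on {0..T} g"
    and lim: "\<And>t. t \<in> {0..T} \<Longrightarrow> (\<lambda>j. (f (r j) t, m (r j) t)) \<longlonglongrightarrow> g t"
  proof (rule equilipschitz_convergent_subsequence[of "{0..T}" "\<lambda>n t. (f n t, m n t)"
        "2 * pop_bound" "2 * rate_bound"])
    show "norm (f n t, m n t) \<le> 2 * pop_bound" for n t
      using norm_Pair_le[of "f n t" "m n t"] process_state_bound[OF P, of n t] by simp
    show "norm ((f n s, m n s) - (f n t, m n t)) \<le> 2 * rate_bound * \<bar>s - t\<bar>" for n s t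
      using norm_Pair_le[of "f n s - f n t" "m n s - m n t"] process_state_lipschitz[OF P, of n s t]
      by simp
  qed auto
  define fs where "fs t = fst (g (clamp 0 T t))" for t
  define ms where "ms t = snd (g (clamp 0 T t))" for t
  show ?thesis
  proof
    show "strict_mono r" by (rule r)
    show "continuous_on UNIV fs" "continuous_on UNIV ms"
      unfolding fs_def[abs_def] ms_def[abs_def] using g
      by (auto intro!: continuous_on_clamp_real continuous_intros)
    show "fs (clamp 0 T t) = fs t" "ms (clamp 0 T t) = ms t" for t
      using clamp_real_id[OF clamp_real_in[OF T]] by (simp_all add: fs_def ms_def)
    show "(\<lambda>j. f (r j) t) \<longlonglongrightarrow> fs t" "(\<lambda>j. m (r j) t) \<longlonglongrightarrow> ms t" for t
      using tendsto_fst[OF lim[OF clamp_real_in[OF T]]] tendsto_snd[OF lim[OF clamp_real_in[OF T]]]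
      by (simp_all add: fs_def ms_def processD(7,8)[OF P])
  qed
qed

lemma limit_state_equation:
  fixes e x y :: "nat \<Rightarrow> real \<Rightarrow> real"
  assumes [measurable]: "\<And>n. e n \<in> borel_measurable lborel" "\<And>n. x n \<in> borel_measurable lborel"
      "\<And>n. y n \<in> borel_measurable lborel" "X \<in> borel_measurable lborel" "Y \<in> borel_measurable lborel"
      "\<eta> \<in> borel_measurable lborel"
    and bound: "\<And>n s. \<bar>x n s\<bar> \<le> pop_bound" "\<And>n s. \<bar>y n s\<bar> \<le> pop_bound"
    and range: "\<And>n s. e n s \<in> {0..1}" "\<And>s. \<eta> s \<in> {0..1}"
    and lim: "\<And>s. (\<lambda>n. x n s) \<longlonglongrightarrow> X s" "\<And>s. (\<lambda>n. y n s) \<longlonglongrightarrow> Y s"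
    and w: "tail_weights w N"
    and AE_lim: "AE s in lborel. s \<in> {0..t} \<longrightarrow> (\<lambda>k. \<Sum>j<N k. w k j * e j s) \<longlonglongrightarrow> \<eta> s"
    and eq: "\<And>n. x n t = x0 + primitive (\<lambda>s. rhs_f \<beta> \<delta> K (e n s) (x n s) (y n s)) t"
  shows "X t = x0 + primitive (\<lambda>s. rhs_f \<beta> \<delta> K (\<eta> s) (X s) (Y s)) t"
proof -
  have "X t = x0 + primitive (\<lambda>s. rhs_f \<beta> \<delta> K 0 (X s) (Y s) - \<eta> s * X s) t"
  proof (rule linear_control_equation_limit[OF _ _ _ _ _ _ bound(1) _ range lim(1) _ w AE_lim])
    show "\<bar>rhs_f \<beta> \<delta> K 0 (x n s) (y n s)\<bar> \<le> rate_bound" for n s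
      using bound by (intro rhs_bound) auto
    show "(\<lambda>n. rhs_f \<beta> \<delta> K 0 (x n s) (y n s)) \<longlonglongrightarrow> rhs_f \<beta> \<delta> K 0 (X s) (Y s)" for s
      unfolding rhs_f_def Lfac_def using K by (auto intro!: tendsto_intros lim)
    show "x n t = x0 + primitive (\<lambda>s. rhs_f \<beta> \<delta> K 0 (x n s) (y n s) - e n s * x n s) t" for n
      using eq[of n] by (simp add: rhs_f_def)
  qed measurable
  then show ?thesis by (simp add: rhs_f_def)
qed

lemma limit_is_process:
  fixes e1 e2 f m :: "nat \<Rightarrow> real \<Rightarrow> real"
  assumes P: "\<And>n. process (e1 n) (e2 n) (f n) (m n)"
    and fs: "continuous_on UNIV fs" "\<And>t. fs (clamp 0 T t) = fs t" "\<And>t. (\<lambda>n. f n t) \<longlonglongrightarrow> fs t"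
    and ms: "continuous_on UNIV ms" "\<And>t. ms (clamp 0 T t) = ms t" "\<And>t. (\<lambda>n. m n t) \<longlonglongrightarrow> ms t"
    and w: "tail_weights w N"
    and \<eta>: "\<eta>1 \<in> borel_measurable lborel" "\<eta>2 \<in> borel_measurable lborel"
      "\<And>s. \<eta>1 s \<in> {0..1}" "\<And>s. \<eta>2 s \<in> {0..1}"
    and AE_lim: "AE s in lborel. s \<in> {0..T} \<longrightarrow> (\<lambda>k. \<Sum>j<N k. w k j *\<^sub>R (e1 j s, e2 j s)) \<longlonglongrightarrow> (\<eta>1 s, \<eta>2 s)"
  shows "process \<eta>1 \<eta>2 fs ms"
proof -
  have "fs \<in> borel_measurable lborel" "ms \<in> borel_measurable lborel"
    using borel_measurable_continuous_onI[OF fs(1)] borel_measurable_continuous_onI[OF ms(1)] by simp_all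
  note meas = processD(1,2)[OF P] process_measurable[OF P] \<eta>(1,2) this
  have AE_sub: "AE s in lborel. s \<in> {0..t} \<longrightarrow> (\<lambda>k. \<Sum>j<N k. w k j * e1 j s) \<longlonglongrightarrow> \<eta>1 s"
      "AE s in lborel. s \<in> {0..t} \<longrightarrow> (\<lambda>k. \<Sum>j<N k. w k j * e2 j s) \<longlonglongrightarrow> \<eta>2 s"
    if "t \<in> {0..T}" for t
    using AE_lim that
    by (auto elim!: eventually_mono dest: tendsto_fst tendsto_snd simp: fst_sum snd_sum)
  have "fs t = f0 + primitive (\<lambda>s. rhs_f \<beta> \<delta> K (\<eta>1 s) (fs s) (ms s)) t"
    "ms t = m0 + primitive (\<lambda>s. rhs_f \<beta> \<delta> K (\<eta>2 s) (ms s) (fs s)) t" if t: "t \<in> {0..T}" for t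
    using limit_state_equation[OF meas(1,3,4,7,8,5) process_state_bound[OF P] processD(3)[OF P] \<eta>(3)
        fs(3) ms(3) w AE_sub(1)[OF t] processD(9)[OF P t]]
      limit_state_equation[OF meas(2,4,3,8,7,6) process_state_bound(2,1)[OF P] processD(4)[OF P] \<eta>(4)
        ms(3) fs(3) w AE_sub(2)[OF t] processD(10)[OF P t, unfolded rhs_m_swap]]
    by simp_all
  then show ?thesis
    unfolding process_def rhs_m_swap using \<eta> fs(1,2) ms(1,2) by blast
qed

lemma limit_J4_ge:
  fixes e1 e2 f m :: "nat \<Rightarrow> real \<Rightarrow> real"
  assumes P: "\<And>n. process (e1 n) (e2 n) (f n) (m n)"
    and J: "(\<lambda>n. J4 T (e1 n) (e2 n) (f n) (m n)) \<longlonglongrightarrow> J"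
    and lim: "\<And>t. (\<lambda>n. f n t) \<longlonglongrightarrow> fs t" "\<And>t. (\<lambda>n. m n t) \<longlonglongrightarrow> ms t"
    and w: "tail_weights w N"
    and AE_lim: "AE s in lborel. s \<in> {0..T} \<longrightarrow> (\<lambda>k. \<Sum>j<N k. w k j *\<^sub>R (e1 j s, e2 j s)) \<longlonglongrightarrow> (\<eta>1 s, \<eta>2 s)"
    and limit: "process \<eta>1 \<eta>2 fs ms"
  shows "J \<le> J4 T \<eta>1 \<eta>2 fs ms"
proof -
  note [measurable] = process_measurable[OF P] processD(1,2)[OF P]
    process_measurable[OF limit] processD(1,2)[OF limit]
  define Ss where "Ss = primitive (\<lambda>t. fs t + ms t) T"
  have "(\<lambda>n. primitive (\<lambda>t. f n t + m n t) T) \<longlonglongrightarrow> Ss"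
    unfolding Ss_def
  proof (rule primitive_tendsto[where C=pop_bound])
    show "\<bar>f n t + m n t\<bar> \<le> pop_bound" for n t using process_box[OF P, of n t] by simp
    show "AE t in lborel. t \<in> {0..T} \<longrightarrow> (\<lambda>n. f n t + m n t) \<longlonglongrightarrow> fs t + ms t"
      by (intro AE_I2 impI tendsto_add lim)
  qed measurable
  then have "(\<lambda>n. 2 * (- primitive (\<lambda>t. f n t + m n t) T - J4 T (e1 n) (e2 n) (f n) (m n)))
      \<longlonglongrightarrow> 2 * (- Ss - J)"
    by (intro tendsto_intros J)
  then have "(\<lambda>n. primitive (\<lambda>t. (norm (e1 n t, e2 n t))\<^sup>2) T) \<longlonglongrightarrow> 2 * (- Ss - J)"
    by (simp add: process_J4[OF P] norm_Pair_square)
  moreover have "norm (e1 j s, e2 j s) \<le> 2" for j s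
    using norm_Pair_le[of "e1 j s" "e2 j s"] processD(3,4)[OF P, of j s] by simp
  ultimately have "primitive (\<lambda>s. (norm (\<eta>1 s, \<eta>2 s))\<^sup>2) T \<le> 2 * (- Ss - J)"
    using tail_weights_primitive_norm_square_le[OF w, where x="\<lambda>j s. (e1 j s, e2 j s)"
        and y="\<lambda>s. (\<eta>1 s, \<eta>2 s)" and B=2 and t=T, OF _ _ _ AE_lim]
    by measurable
  then show ?thesis
    by (simp add: process_J4[OF limit] norm_Pair_square Ss_def)
qed

lemma process_limit:
  fixes e1 e2 f m :: "nat \<Rightarrow> real \<Rightarrow> real"
  assumes P: "\<And>n. process (e1 n) (e2 n) (f n) (m n)"
    and J: "(\<lambda>n. J4 T (e1 n) (e2 n) (f n) (m n)) \<longlonglongrightarrow> J"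
  obtains \<eta>1 \<eta>2 fs ms where "process \<eta>1 \<eta>2 fs ms" "J \<le> J4 T \<eta>1 \<eta>2 fs ms"
proof -
  obtain r fs ms where r: "strict_mono r" and cont: "continuous_on UNIV fs" "continuous_on UNIV ms"
    and freeze: "\<And>t. fs (clamp 0 T t) = fs t" "\<And>t. ms (clamp 0 T t) = ms t"
    and lim: "\<And>t. (\<lambda>j. f (r j) t) \<longlonglongrightarrow> fs t" "\<And>t. (\<lambda>j. m (r j) t) \<longlonglongrightarrow> ms t"
    by (rule process_states_subsequence[of e1 e2 f m, OF P], rule that)
  have Pr: "process (e1 (r n)) (e2 (r n)) (f (r n)) (m (r n))" for n by (rule P)
  obtain w N \<eta>1 \<eta>2 where w: "tail_weights w N"
    and \<eta>: "\<eta>1 \<in> borel_measurable lborel" "\<eta>2 \<in> borel_measurable lborel"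
      "\<And>s. \<eta>1 s \<in> {0..1}" "\<And>s. \<eta>2 s \<in> {0..1}"
    and AE_lim: "AE s in lborel. s \<in> {0..T} \<longrightarrow>
      (\<lambda>k. \<Sum>j<N k. w k j *\<^sub>R (e1 (r j) s, e2 (r j) s)) \<longlonglongrightarrow> (\<eta>1 s, \<eta>2 s)"
    by (rule tail_limit_of_controls[of "\<lambda>j. e1 (r j)" "\<lambda>j. e2 (r j)" T, OF processD(1-4)[OF P]],
        rule that)
  have "process \<eta>1 \<eta>2 fs ms"
    by (rule limit_is_process[OF Pr cont(1) freeze(1) lim(1) cont(2) freeze(2) lim(2) w \<eta> AE_lim])
  moreover have "J \<le> J4 T \<eta>1 \<eta>2 fs ms"
    using LIMSEQ_subseq_LIMSEQ[OF J r]
    by (intro limit_J4_ge[OF Pr _ lim w AE_lim \<open>process \<eta>1 \<eta>2 fs ms\<close>]) (simp add: comp_def)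
  ultimately show ?thesis by (rule that)
qed

lemma exists_optimal_process:
  obtains \<eta>1 \<eta>2 fs ms where "process \<eta>1 \<eta>2 fs ms"
    "\<And>e1 e2 f m. process e1 e2 f m \<Longrightarrow> J4 T e1 e2 f m \<le> J4 T \<eta>1 \<eta>2 fs ms"
proof -
  define V where "V = {J4 T e1 e2 f m | e1 e2 f m. process e1 e2 f m}"
  have "V \<noteq> {}" using exists_process_zero_control by (auto simp: V_def)
  have bdd: "bdd_above V" by (rule bdd_aboveI[where M=0]) (auto simp: V_def J4_nonpos)
  have upper: "J4 T e1 e2 f m \<le> Sup V" if "process e1 e2 f m" for e1 e2 f m
    using that by (intro cSup_upper[OF _ bdd]) (auto simp: V_def)
  have "\<forall>n. \<exists>e1 e2 f m. process e1 e2 f m \<and> Sup V - 1 / Suc n < J4 T e1 e2 f m"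
    using less_cSupD[OF \<open>V \<noteq> {}\<close>, of "Sup V - 1 / Suc _"] by (fastforce simp: V_def)
  then obtain e1 e2 f m where P: "\<And>n. process (e1 n) (e2 n) (f n) (m n)"
    and near: "\<And>n. Sup V - 1 / Suc n < J4 T (e1 n) (e2 n) (f n) (m n)"
    by metis
  have "(\<lambda>n. J4 T (e1 n) (e2 n) (f n) (m n)) \<longlonglongrightarrow> Sup V"
  proof (rule real_tendsto_sandwich[where f="\<lambda>n. Sup V - 1 / Suc n" and h="\<lambda>_. Sup V"])
    show "\<forall>\<^sub>F n in sequentially. Sup V - 1 / Suc n \<le> J4 T (e1 n) (e2 n) (f n) (m n)"
      by (intro always_eventually allI less_imp_le near)
    show "\<forall>\<^sub>F n in sequentially. J4 T (e1 n) (e2 n) (f n) (m n) \<le> Sup V"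
      using upper[OF P] by simp
    show "(\<lambda>n. Sup V - 1 / Suc n) \<longlonglongrightarrow> Sup V"
      using tendsto_diff[OF tendsto_const LIMSEQ_inverse_real_of_nat, of "Sup V"]
      by (simp add: divide_inverse)
  qed simp
  then obtain \<eta>1 \<eta>2 fs ms where "process \<eta>1 \<eta>2 fs ms" "Sup V \<le> J4 T \<eta>1 \<eta>2 fs ms"
    by (rule process_limit[OF P])
  then show ?thesis using that upper by fastforce
qed

end

theorem mainTheorem8:
  fixes \<beta> \<delta> K T f0 m0 :: real
  assumes "0 < \<beta>" "\<beta> < 1" "0 < \<delta>" "\<delta> < 1" "0 < K" "0 < T"
    and "0 \<le> f0" "0 \<le> m0"
  shows "\<exists>e1s e2s fs ms. (e1s, e2s) \<in> U4 T \<and> is_state \<beta> \<delta> K T f0 m0 e1s e2s fs ms \<and>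
           (\<forall>e1 e2 f m. (e1, e2) \<in> U4 T \<longrightarrow> is_state \<beta> \<delta> K T f0 m0 e1 e2 f m \<longrightarrow>
               J4 T e1 e2 f m \<le> J4 T e1s e2s fs ms)"
proof -
  interpret harvest_model \<beta> \<delta> K T f0 m0
    using assms by unfold_locales auto
  obtain \<eta>1 \<eta>2 fs ms where opt: "process \<eta>1 \<eta>2 fs ms"
    and max: "\<And>e1 e2 f m. process e1 e2 f m \<Longrightarrow> J4 T e1 e2 f m \<le> J4 T \<eta>1 \<eta>2 fs ms"
    by (rule exists_optimal_process, rule that)
  have "J4 T e1 e2 f m \<le> J4 T \<eta>1 \<eta>2 fs ms"
    if "(e1, e2) \<in> U4 T" "is_state \<beta> \<delta> K T f0 m0 e1 e2 f m" for e1 e2 f m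
    using max[OF admissible_imp_process(1)[OF that]] admissible_imp_process(2)[OF that] by simp
  then show ?thesis
    using process_imp_admissible[OF opt] by blast
qed

end
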